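(* Let $f:\mathbb{R}^n\to\mathbb{R}$ and $c:\mathbb{R}^n\to\mathbb{R}^m$, and let $\{x_k\}$, $\{d_k\}$, $\{y_k\}$ be generated by either Algorithm 1 or Algorithm 2 (described in the context) applied to $\min_x f(x)$ subject to $c(x)=0$. Suppose the Standing Assumption and the Matrix Assumption of the context hold, and that the algorithm does not terminate finitely. Then $$\lim_{k\to\infty}\|d_k\|_2=0,\qquad \lim_{k\to\infty}\|c_k\|_2=0,\qquad \lim_{k\to\infty}\|g_k+J_k^Ty_k\|_2=0.$$
   Context: Notation: $g_k=\nabla f(x_k)$, $c_k=c(x_k)$, $J_k=\nabla c(x_k)^T\in\mathbb{R}^{m\times n}$. Merit function $\phi(x,\tau)=\tau f(x)+\|c(x)\|_1$ for $\tau>0$. Model reduction: $\Delta q(x,\tau,g,H,d)=-\tau\big(g^Td+\tfrac12\max\{d^THd,0\}\big)+\|c(x)\|_1$. Matrix Assumption: $\{H_k\}$ are symmetric $n\times n$ matrices with $\|H_k\|_2\le\kappa_H$ and $u^TH_ku\ge\zeta\|u\|_2^2$ for all $u$ with $J_ku=0$, for constants $\kappa_H,\zeta>0$. Common iteration ($k=0,1,\dots$): $(d_k,y_k)$ solves $H_kd_k+J_k^Ty_k=-g_k$, $J_kd_k=-c_k$. If $g_k+J_k^Ty_k=0$ and $c_k=0$, stop. Otherwise set $\tau_k^{trial}=\infty$ if $g_k^Td_k+\max\{d_k^TH_kd_k,0\}\le0$ and $\tau_k^{trial}=\frac{(1-\sigma)\|c_k\|_1}{g_k^Td_k+\max\{d_k^TH_kd_k,0\}}$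 otherwise; set $\tau_k=\tau_{k-1}$ if $\tau_{k-1}\le\tau_k^{trial}$ and $\tau_k=(1-\epsilon)\tau_k^{trial}$ otherwise. Then choose $\alpha_k>0$ and set $x_{k+1}=x_k+\alpha_kd_k$. The sufficient decrease condition for a trial stepsize $\alpha$ is (SD): $\phi(x_k+\alpha d_k,\tau_k)\le\phi(x_k,\tau_k)-\eta\alpha\,\Delta q(x_k,\tau_k,g_k,H_k,d_k)$. Algorithm 1 (inputs $x_0$, $\tau_{-1}>0$, $\epsilon,\sigma,\eta\in(0,1)$, $\rho>1$, $L_{-1}>0$, $\gamma_{-1,i}>0$ for $i=1,\dots,m$): choose $L_{k,0}\in(0,L_{k-1}]$ and $\gamma_{k,i,0}\in(0,\gamma_{k-1,i}]$. For $j=0,1,\dots$: with $\Lambda_{k,j}=\tau_kL_{k,j}+\sum_i\gamma_{k,i,j}$, set $\widehat\alpha_{k,j}=\frac{2(1-\eta)\Delta q(x_k,\tau_k,g_k,H_k,d_k)}{\Lambda_{k,j}\|d_k\|_2^2}$, $\widetilde\alpha_{k,j}=\widehat\alpha_{k,j}-\frac{4\|c_k\|_1}{\Lambda_{k,j}\|d_k\|_2^2}$, and $\alpha_{k,j}=\widehat\alpha_{k,j}$ if $\widehat\alpha_{k,j}<1$, $\alpha_{k,j}=1$ if $\widetilde\alpha_{k,j}\le1\le\widehat\alpha_{k,j}$, $\alpha_{k,j}=\widetilde\alpha_{k,j}$ if $\widetilde\alpha_{k,j}>1$. Let (LF) be $f(x_k+\alpha_{k,j}d_k)\le f(x_k)+\alpha_{k,j}g_k^Td_k+\tfrac12L_{k,j}\alpha_{k,j}^2\|d_k\|_2^2$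 and (LC$_i$) be $|c_i(x_k+\alpha_{k,j}d_k)|\le|c_i(x_k)+\alpha_{k,j}\nabla c_i(x_k)^Td_k|+\tfrac12\gamma_{k,i,j}\alpha_{k,j}^2\|d_k\|_2^2$. If (SD) holds with $\alpha=\alpha_{k,j}$, or (LF) and all (LC$_i$) hold, set $L_k=L_{k,j}$, $\gamma_{k,i}=\gamma_{k,i,j}$, $\alpha_k=\alpha_{k,j}$ and end the inner loop; otherwise set $L_{k,j+1}=\rho L_{k,j}$ if (LF) fails (else $L_{k,j}$), and $\gamma_{k,i,j+1}=\rho\gamma_{k,i,j}$ if (LC$_i$) fails (else $\gamma_{k,i,j}$). Algorithm 2 (inputs $x_0$, $\tau_{-1}>0$, $\epsilon,\sigma,\eta,\nu\in(0,1)$, $\alpha>0$): $\alpha_k=\alpha_{k,j}=\nu^j\alpha$ for the smallest $j\in\{0,1,\dots\}$ such that (SD) holds with $\alpha=\alpha_{k,j}$. Standing Assumption: there is an open convex set $\mathcal X\subseteq\mathbb{R}^n$ containing all iterates $x_k$ and all trial points $x_k+\alpha_{k,j}d_k$; $f$ is continuously differentiable and bounded below on $\mathcal X$; $\nabla f$ is bounded and Lipschitz with constant $L$ on $\mathcal X$; $c$ and $\nabla c^T$ are bounded on $\mathcal X$; each $\nabla c_i$ is Lipschitz with constant $\gamma_i$ on $\mathcal X$; the singular values of $\nabla c(x)^T$ are bounded away from zero uniformly over $x\in\mathcal X$. *)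

theory Defs
  imports "HOL-Analysis.Analysis"
begin

text \<open>Vectors in R^n are real^'n, vectors in R^m are real^'m; the Jacobian
  J(x) = (nabla c(x))^T is an m x n matrix real^'n^'m whose i-th row is nabla c_i(x).\<close>

definition l1norm :: "real^'m \<Rightarrow> real" where
  "l1norm v = (\<Sum>i\<in>UNIV. \<bar>v $ i\<bar>)"

definition merit :: "(real^'n \<Rightarrow> real) \<Rightarrow> (real^'n \<Rightarrow> real^'m) \<Rightarrow> real \<Rightarrow> real^'n \<Rightarrow> real" where
  "merit f c \<tau> x = \<tau> * f x + l1norm (c x)"

definition model_red :: "(real^'n \<Rightarrow> real^'m) \<Rightarrow> real^'n \<Rightarrow> real \<Rightarrow> real^'n \<Rightarrow> real^'n^'n \<Rightarrow> real^'n \<Rightarrow> real" where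
  "model_red c x \<tau> gv Hm dv = - \<tau> * (gv \<bullet> dv + 1/2 * max (dv \<bullet> (Hm *v dv)) 0) + l1norm (c x)"

definition suff_dec :: "(real^'n \<Rightarrow> real) \<Rightarrow> (real^'n \<Rightarrow> real^'m) \<Rightarrow> real \<Rightarrow> real \<Rightarrow> real^'n \<Rightarrow> real^'n
    \<Rightarrow> real^'n^'n \<Rightarrow> real^'n \<Rightarrow> real \<Rightarrow> bool" where
  "suff_dec f c \<eta> \<tau> xk gk Hk dk \<alpha> \<longleftrightarrow>
     merit f c \<tau> (xk + \<alpha> *\<^sub>R dk) \<le> merit f c \<tau> xk - \<eta> * \<alpha> * model_red c xk \<tau> gk Hk dk"

text \<open>Merit parameter update: tau_k from tau_{k-1}. The case tau_trial = infinity
  (denominator \<le> 0) is handled by keeping tau_{k-1}.\<close>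
definition tau_update :: "real \<Rightarrow> real \<Rightarrow> real \<Rightarrow> real \<Rightarrow> real \<Rightarrow> real \<Rightarrow> real" where
  "tau_update \<epsilon> \<sigma> \<tau>prev cl1 gd dHd =
     (let den = gd + max dHd 0 in
      if den \<le> 0 then \<tau>prev
      else if \<tau>prev \<le> (1 - \<sigma>) * cl1 / den then \<tau>prev
      else (1 - \<epsilon>) * ((1 - \<sigma>) * cl1 / den))"

text \<open>Common iteration (outer loop), with x_{k+1} = x_k + alpha_k d_k, alpha_k > 0,
  and the non-termination of the algorithm.\<close>
definition sqp_common ::
  "(real^'n \<Rightarrow> real^'n) \<Rightarrow> (real^'n \<Rightarrow> real^'m) \<Rightarrow> (real^'n \<Rightarrow> real^'n^'m)
   \<Rightarrow> (nat \<Rightarrow> real^'n^'n) \<Rightarrow> (nat \<Rightarrow> real^'n) \<Rightarrow> (nat \<Rightarrow> real^'n) \<Rightarrow> (nat \<Rightarrow> real^'m)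
   \<Rightarrow> (nat \<Rightarrow> real) \<Rightarrow> (nat \<Rightarrow> real) \<Rightarrow> real \<Rightarrow> real \<Rightarrow> real \<Rightarrow> bool" where
  "sqp_common g c J H x d y \<tau> \<alpha> \<tau>init \<epsilon> \<sigma> \<longleftrightarrow>
     (\<forall>k. H k *v d k + transpose (J (x k)) *v y k = - g (x k)
        \<and> J (x k) *v d k = - c (x k)
        \<and> \<not> (g (x k) + transpose (J (x k)) *v y k = 0 \<and> c (x k) = 0)
        \<and> \<tau> k = tau_update \<epsilon> \<sigma> (if k = 0 then \<tau>init else \<tau> (k - 1))
                   (l1norm (c (x k))) (g (x k) \<bullet> d k) (d k \<bullet> (H k *v d k))
        \<and> 0 < \<alpha> k
        \<and> x (Suc k) = x k + \<alpha> k *\<^sub>R d k)"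

definition alg1_alpha :: "real \<Rightarrow> real \<Rightarrow> real \<Rightarrow> real \<Rightarrow> real \<Rightarrow> real" where
  "alg1_alpha \<eta> dq cl1 \<Lambda> nd2 =
     (let ah = 2 * (1 - \<eta>) * dq / (\<Lambda> * nd2);
          atl = ah - 4 * cl1 / (\<Lambda> * nd2)
      in if ah < 1 then ah else if atl \<le> 1 then 1 else atl)"

definition alg1_step ::
  "real \<Rightarrow> (real^'n \<Rightarrow> real^'n) \<Rightarrow> (real^'n \<Rightarrow> real^'m) \<Rightarrow> (nat \<Rightarrow> real^'n^'n)
   \<Rightarrow> (nat \<Rightarrow> real^'n) \<Rightarrow> (nat \<Rightarrow> real^'n) \<Rightarrow> (nat \<Rightarrow> real)
   \<Rightarrow> (nat \<Rightarrow> nat \<Rightarrow> real) \<Rightarrow> (nat \<Rightarrow> nat \<Rightarrow> 'm \<Rightarrow> real) \<Rightarrow> nat \<Rightarrow> nat \<Rightarrow> real" where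
  "alg1_step \<eta> g c H x d \<tau> Lk Gk k j =
     alg1_alpha \<eta> (model_red c (x k) (\<tau> k) (g (x k)) (H k) (d k)) (l1norm (c (x k)))
       (\<tau> k * Lk k j + (\<Sum>i\<in>UNIV. Gk k j i)) (norm (d k) ^ 2)"

text \<open>Algorithm 1 inner loop: Lk k j = L_{k,j}, Gk k j i = gamma_{k,i,j}, the inner loop
  of iteration k terminates at index jk k.\<close>
definition alg1 ::
  "(real^'n \<Rightarrow> real) \<Rightarrow> (real^'n \<Rightarrow> real^'n) \<Rightarrow> (real^'n \<Rightarrow> real^'m) \<Rightarrow> (real^'n \<Rightarrow> real^'n^'m)
   \<Rightarrow> (nat \<Rightarrow> real^'n^'n) \<Rightarrow> (nat \<Rightarrow> real^'n) \<Rightarrow> (nat \<Rightarrow> real^'n)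
   \<Rightarrow> (nat \<Rightarrow> real) \<Rightarrow> (nat \<Rightarrow> real) \<Rightarrow> real \<Rightarrow> real \<Rightarrow> real \<Rightarrow> ('m \<Rightarrow> real)
   \<Rightarrow> (nat \<Rightarrow> nat \<Rightarrow> real) \<Rightarrow> (nat \<Rightarrow> nat \<Rightarrow> 'm \<Rightarrow> real) \<Rightarrow> (nat \<Rightarrow> nat) \<Rightarrow> bool" where
  "alg1 f g c J H x d \<tau> \<alpha> \<eta> \<rho> Linit Ginit Lk Gk jk \<longleftrightarrow>
     (\<forall>k.
       (let a = alg1_step \<eta> g c H x d \<tau> Lk Gk k;
            LF = (\<lambda>j. f (x k + a j *\<^sub>R d k) \<le> f (x k) + a j * (g (x k) \<bullet> d k)
                         + 1/2 * Lk k j * (a j)^2 * (norm (d k))^2);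
            LC = (\<lambda>j i. \<bar>c (x k + a j *\<^sub>R d k) $ i\<bar> \<le> \<bar>c (x k) $ i + a j * ((J (x k) *v d k) $ i)\<bar>
                         + 1/2 * Gk k j i * (a j)^2 * (norm (d k))^2);
            acc = (\<lambda>j. suff_dec f c \<eta> (\<tau> k) (x k) (g (x k)) (H k) (d k) (a j)
                        \<or> (LF j \<and> (\<forall>i. LC j i)))
        in 0 < Lk k 0 \<and> Lk k 0 \<le> (if k = 0 then Linit else Lk (k - 1) (jk (k - 1)))
         \<and> (\<forall>i. 0 < Gk k 0 i \<and> Gk k 0 i \<le> (if k = 0 then Ginit i else Gk (k - 1) (jk (k - 1)) i))
         \<and> (\<forall>j < jk k. \<not> acc j
              \<and> Lk k (Suc j) = (if LF j then Lk k j else \<rho> * Lk k j)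
              \<and> (\<forall>i. Gk k (Suc j) i = (if LC j i then Gk k j i else \<rho> * Gk k j i)))
         \<and> acc (jk k)
         \<and> \<alpha> k = a (jk k)))"

definition alg2 ::
  "(real^'n \<Rightarrow> real) \<Rightarrow> (real^'n \<Rightarrow> real^'n) \<Rightarrow> (real^'n \<Rightarrow> real^'m)
   \<Rightarrow> (nat \<Rightarrow> real^'n^'n) \<Rightarrow> (nat \<Rightarrow> real^'n) \<Rightarrow> (nat \<Rightarrow> real^'n)
   \<Rightarrow> (nat \<Rightarrow> real) \<Rightarrow> (nat \<Rightarrow> real) \<Rightarrow> real \<Rightarrow> real \<Rightarrow> real \<Rightarrow> bool" where
  "alg2 f g c H x d \<tau> \<alpha> \<eta> \<nu> \<alpha>0 \<longleftrightarrow>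
     (\<forall>k. \<exists>j. \<alpha> k = \<nu> ^ j * \<alpha>0
        \<and> suff_dec f c \<eta> (\<tau> k) (x k) (g (x k)) (H k) (d k) (\<nu> ^ j * \<alpha>0)
        \<and> (\<forall>i < j. \<not> suff_dec f c \<eta> (\<tau> k) (x k) (g (x k)) (H k) (d k) (\<nu> ^ i * \<alpha>0)))"

text \<open>Singular values of the m x n matrix A (m \<le> n) uniformly bounded below by kappa:
  every singular value sigma_i(A) \<ge> kappa, i.e. sigma_min(A) = min_{|v|=1} |A^T v| \<ge> kappa.\<close>
definition sing_vals_ge :: "real \<Rightarrow> real^'n^'m \<Rightarrow> bool" where
  "sing_vals_ge \<kappa> A \<longleftrightarrow> (\<forall>v. \<kappa> * norm v \<le> norm (transpose A *v v))"

end

theory Submission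
  imports Defs
begin

text \<open>Decomposing d_k into a null-space part and a part of size O(|c_k|), the Newton system
  bounds d_k and y_k and gives |d_k|^2 \<le> O(max(d_k H_k d_k, 0) + |c_k|).  With bounded multipliers
  the trial values of the merit parameter stay above a positive constant, so \<tau>_k is bounded
  away from zero and the model reduction dominates both |d_k|^2 and |c_k|.  Lipschitz
  continuity of the gradients makes every short enough step acceptable, which bounds the stepsizes
  of both algorithms away from zero.  The shifted merit values \<tau>_k (f x_k - f_low) + |c_k|_1 then
  decrease by a fixed multiple of the model reduction in every iteration, so the model reductions
  are summable and tend to zero; g_k + J_k^T y_k = - H_k d_k gives the last limit.\<close>

section \<open>Linear algebra of the Newton step\<close>

lemma l1norm_nonneg: "0 \<le> l1norm v"
  unfolding l1norm_def by (simp add: sum_nonneg)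

lemma norm_le_l1norm: "norm v \<le> l1norm v"
  unfolding l1norm_def by (rule norm_le_l1_cart)

lemma inner_transpose_mult: "(transpose A *v w) \<bullet> v = w \<bullet> (A *v v)"
  for A :: "real^'n^'m"
  by (metis dot_lmul_matrix vector_transpose_matrix transpose_transpose)

lemma norm_matrix_vector_le:
  fixes A :: "real^'n^'m"
  assumes "onorm (\<lambda>v. A *v v) \<le> \<kappa>"
  shows "norm (A *v v) \<le> \<kappa> * norm v"
proof -
  have "norm (A *v v) \<le> onorm (\<lambda>v. A *v v) * norm v"
    by (rule onorm[OF matrix_vector_mul_bounded_linear])
  also have "\<dots> \<le> \<kappa> * norm v"
    using assms by (intro mult_right_mono) auto
  finally show ?thesis .
qed

lemma abs_inner_matrix_vector_le:
  fixes A :: "real^'n^'m"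
  assumes "onorm (\<lambda>v. A *v v) \<le> \<kappa>"
  shows "\<bar>u \<bullet> (A *v v)\<bar> \<le> \<kappa> * norm u * norm v"
proof -
  have "\<bar>u \<bullet> (A *v v)\<bar> \<le> norm u * norm (A *v v)"
    by (rule Cauchy_Schwarz_ineq2)
  also have "\<dots> \<le> norm u * (\<kappa> * norm v)"
    using norm_matrix_vector_le[OF assms] by (intro mult_left_mono) auto
  finally show ?thesis
    by (simp add: mult_ac)
qed

text \<open>The normal component v is taken in the range of transpose A, say v = transpose A w;
  then \<kappa> |w| \<le> |v| and |v|^2 = w \<bullet> A v \<le> |w| |A v|.\<close>
lemma null_space_decomposition:
  fixes A :: "real^'n^'m"
  assumes \<kappa>: "0 < \<kappa>" "sing_vals_ge \<kappa> A"
  obtains u v where "d = u + v" "A *v u = 0" "\<kappa> * norm v \<le> norm (A *v d)"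
proof -
  let ?R = "range (\<lambda>w. transpose A *v w)"
  have "subspace ?R"
    by (rule linear_subspace_image[OF matrix_vector_mul_linear subspace_UNIV])
  obtain v u where v: "v \<in> span ?R" and u: "\<And>z. z \<in> span ?R \<Longrightarrow> orthogonal u z"
    and d: "d = v + u"
    using orthogonal_subspace_decomp_exists[of ?R d] by blast
  have "v \<in> ?R"
    using v \<open>subspace ?R\<close> span_eq_iff by blast
  then obtain w where w: "v = transpose A *v w"
    by blast
  have "u \<bullet> (transpose A *v (A *v u)) = 0"
    using u[OF span_base] by (simp only: orthogonal_def) blast
  then have "(A *v u) \<bullet> (A *v u) = 0"
    by (simp only: inner_commute[of u] inner_transpose_mult)
  then have Au: "A *v u = 0"
    by simp
  have Ad: "A *v d = A *v v"
    using d Au by (simp add: matrix_vector_right_distrib)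
  have "\<kappa> * norm w \<le> norm v"
    using \<kappa>(2) w by (simp add: sing_vals_ge_def)
  have "(norm v)\<^sup>2 = w \<bullet> (A *v v)"
    using w by (simp add: power2_norm_eq_inner dot_lmul_matrix)
  also have "\<dots> \<le> norm w * norm (A *v v)"
    by (rule norm_cauchy_schwarz)
  finally have "\<kappa> * (norm v)\<^sup>2 \<le> (\<kappa> * norm w) * norm (A *v v)"
    using \<kappa>(1) by (simp add: mult_left_mono mult.assoc)
  also have "\<dots> \<le> norm v * norm (A *v v)"
    using \<open>\<kappa> * norm w \<le> norm v\<close> by (simp add: mult_right_mono)
  finally have "\<kappa> * norm v \<le> norm (A *v v)"
    by (cases "v = 0") (auto simp: power2_eq_square \<kappa>(1))
  with d Ad Au show ?thesis
    using that[of u v] by (simp add: add.commute)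
qed

lemma two_mult_le_weighted_squares:
  fixes a b k z :: real
  assumes "0 < z"
  shows "2 * k * a * b \<le> z * a\<^sup>2 + k\<^sup>2 * b\<^sup>2 / z"
proof -
  have "0 \<le> (z * a - k * b)\<^sup>2 / z"
    using assms by simp
  also have "\<dots> = z * a\<^sup>2 + k\<^sup>2 * b\<^sup>2 / z - 2 * k * a * b"
    using assms by (simp add: field_simps power2_eq_square)
  finally show ?thesis
    by simp
qed

lemma quadratic_form_normal_bounds:
  fixes H :: "real^'n^'n"
  assumes H: "onorm (\<lambda>v. H *v v) \<le> \<kappa>H" and \<zeta>: "0 < \<zeta>"
    and curv: "\<zeta> * (norm u)\<^sup>2 \<le> u \<bullet> (H *v u)"
  shows "- ((u + v) \<bullet> (H *v (u + v))) \<le> (\<kappa>H\<^sup>2 / \<zeta> + \<kappa>H) * (norm v)\<^sup>2"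
    and "(norm (u + v))\<^sup>2 \<le> 4 / \<zeta> * max ((u + v) \<bullet> (H *v (u + v))) 0
           + (4 / \<zeta> * (2 * \<kappa>H\<^sup>2 / \<zeta> + \<kappa>H) + 2) * (norm v)\<^sup>2"
proof -
  define a where "a = norm u"
  define b where "b = norm v"
  have expand: "(u + v) \<bullet> (H *v (u + v)) = u \<bullet> (H *v u) + u \<bullet> (H *v v) + v \<bullet> (H *v u) + v \<bullet> (H *v v)"
    by (simp add: matrix_vector_right_distrib inner_add_left inner_add_right)
  have uu: "\<zeta> * a\<^sup>2 \<le> u \<bullet> (H *v u)"
    using curv by (simp add: a_def)
  have uv: "\<bar>u \<bullet> (H *v v)\<bar> \<le> \<kappa>H * a * b" and vu: "\<bar>v \<bullet> (H *v u)\<bar> \<le> \<kappa>H * a * b"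
    and vv: "\<bar>v \<bullet> (H *v v)\<bar> \<le> \<kappa>H * b\<^sup>2"
    using abs_inner_matrix_vector_le[OF H, of u v] abs_inner_matrix_vector_le[OF H, of v u]
      abs_inner_matrix_vector_le[OF H, of v v]
    by (simp_all add: a_def b_def power2_eq_square mult_ac)
  have "2 * \<kappa>H * a * b \<le> \<zeta> * a\<^sup>2 + \<kappa>H\<^sup>2 * b\<^sup>2 / \<zeta>"
    by (rule two_mult_le_weighted_squares[OF \<zeta>])
  then show "- ((u + v) \<bullet> (H *v (u + v))) \<le> (\<kappa>H\<^sup>2 / \<zeta> + \<kappa>H) * (norm v)\<^sup>2"
    using expand uu uv vu vv by (simp add: b_def algebra_simps abs_le_iff)
  have "\<zeta> * a\<^sup>2 \<le> max ((u + v) \<bullet> (H *v (u + v))) 0 + 2 * \<kappa>H * a * b + \<kappa>H * b\<^sup>2"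
    using expand uu uv vu vv by (simp add: abs_le_iff) linarith
  moreover have "2 * (2 * \<kappa>H) * a * b \<le> \<zeta> * a\<^sup>2 + (2 * \<kappa>H)\<^sup>2 * b\<^sup>2 / \<zeta>"
    by (rule two_mult_le_weighted_squares[OF \<zeta>])
  ultimately have "\<zeta> * a\<^sup>2 \<le> 2 * max ((u + v) \<bullet> (H *v (u + v))) 0 + (4 * \<kappa>H\<^sup>2 / \<zeta> + 2 * \<kappa>H) * b\<^sup>2"
    by (simp add: algebra_simps)
  then have a2: "a\<^sup>2 \<le> 2 / \<zeta> * max ((u + v) \<bullet> (H *v (u + v))) 0 + 2 / \<zeta> * (2 * \<kappa>H\<^sup>2 / \<zeta> + \<kappa>H) * b\<^sup>2"
    using \<zeta> by (simp add: field_simps)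
  have "(norm (u + v))\<^sup>2 \<le> (a + b)\<^sup>2"
    using norm_triangle_ineq[of u v] by (simp add: a_def b_def power_mono)
  also have "\<dots> \<le> 2 * a\<^sup>2 + 2 * b\<^sup>2"
    using two_mult_le_weighted_squares[of 1 1 a b] by (simp add: power2_eq_square algebra_simps)
  also have "\<dots> \<le> 2 * (2 / \<zeta> * max ((u + v) \<bullet> (H *v (u + v))) 0
      + 2 / \<zeta> * (2 * \<kappa>H\<^sup>2 / \<zeta> + \<kappa>H) * b\<^sup>2) + 2 * b\<^sup>2"
    by (intro add_right_mono mult_left_mono a2) simp
  finally show "(norm (u + v))\<^sup>2 \<le> 4 / \<zeta> * max ((u + v) \<bullet> (H *v (u + v))) 0
      + (4 / \<zeta> * (2 * \<kappa>H\<^sup>2 / \<zeta> + \<kappa>H) + 2) * (norm v)\<^sup>2"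
    by (simp add: b_def algebra_simps)
qed

lemma tangential_component_bound:
  fixes A :: "real^'n^'m" and H :: "real^'n^'n"
  assumes H: "onorm (\<lambda>v. H *v v) \<le> \<kappa>H" and \<zeta>: "0 < \<zeta>"
    and curv: "\<zeta> * (norm u)\<^sup>2 \<le> u \<bullet> (H *v u)" and Au: "A *v u = 0"
    and stationarity: "H *v (u + v) + transpose A *v y = - gv"
  shows "\<zeta> * norm u \<le> norm gv + \<kappa>H * norm v"
proof -
  have "u \<bullet> (transpose A *v y) = 0"
    using inner_transpose_mult[of A y u] Au by (simp add: inner_commute)
  then have "u \<bullet> (H *v u) = - (u \<bullet> gv) - u \<bullet> (H *v v)"
    using arg_cong[OF stationarity, of "inner u"]
    by (simp add: matrix_vector_right_distrib inner_add_right)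
  also have "\<dots> \<le> norm u * norm gv + \<kappa>H * norm u * norm v"
    using Cauchy_Schwarz_ineq2[of u gv] abs_inner_matrix_vector_le[OF H, of u v] by linarith
  finally have "norm u * (\<zeta> * norm u) \<le> norm u * (norm gv + \<kappa>H * norm v)"
    using curv by (simp add: power2_eq_square algebra_simps)
  moreover have "0 \<le> norm gv + \<kappa>H * norm v"
    using onorm_pos_le[OF matrix_vector_mul_bounded_linear] H
    by (meson add_nonneg_nonneg mult_nonneg_nonneg norm_ge_zero order_trans)
  ultimately show ?thesis
    by (cases "u = 0") auto
qed

lemma newton_step_bounds:
  fixes A :: "real^'n^'m" and H :: "real^'n^'n"
  assumes \<kappa>: "0 < \<kappa>" "sing_vals_ge \<kappa> A"
    and H: "onorm (\<lambda>v. H *v v) \<le> \<kappa>H"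
    and \<zeta>: "0 < \<zeta>" "\<And>u. A *v u = 0 \<Longrightarrow> \<zeta> * (norm u)\<^sup>2 \<le> u \<bullet> (H *v u)"
    and stationarity: "H *v d + transpose A *v y = - gv" and feasibility: "A *v d = - cv"
  shows "\<zeta> * norm d \<le> norm gv + (\<kappa>H + \<zeta>) * (norm cv / \<kappa>)"
    and "- (d \<bullet> (H *v d)) \<le> (\<kappa>H\<^sup>2 / \<zeta> + \<kappa>H) * (norm cv / \<kappa>)\<^sup>2"
    and "(norm d)\<^sup>2 \<le> 4 / \<zeta> * max (d \<bullet> (H *v d)) 0
           + (4 / \<zeta> * (2 * \<kappa>H\<^sup>2 / \<zeta> + \<kappa>H) + 2) * (norm cv / \<kappa>)\<^sup>2"
proof -
  obtain u v where d: "d = u + v" and Au: "A *v u = 0" and "\<kappa> * norm v \<le> norm (A *v d)"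
    using null_space_decomposition[OF \<kappa>] by blast
  then have v: "norm v \<le> norm cv / \<kappa>"
    using feasibility \<kappa>(1) by (simp add: field_simps)
  have curv: "\<zeta> * (norm u)\<^sup>2 \<le> u \<bullet> (H *v u)"
    using \<zeta>(2)[OF Au] .
  have \<kappa>H: "0 \<le> \<kappa>H"
    using onorm_pos_le[OF matrix_vector_mul_bounded_linear] H by (rule order_trans)
  have v2: "(norm v)\<^sup>2 \<le> (norm cv / \<kappa>)\<^sup>2"
    using v by (simp add: power_mono)
  have "\<zeta> * norm u \<le> norm gv + \<kappa>H * norm v"
    using tangential_component_bound[OF H \<zeta>(1) curv Au] stationarity d by blast
  moreover have "\<zeta> * norm d \<le> \<zeta> * norm u + \<zeta> * norm v"
    using norm_triangle_ineq[of u v] \<zeta>(1) d by (simp add: distrib_left[symmetric])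
  ultimately show "\<zeta> * norm d \<le> norm gv + (\<kappa>H + \<zeta>) * (norm cv / \<kappa>)"
    using v \<kappa>H \<zeta>(1) mult_left_mono[OF v, of "\<kappa>H + \<zeta>"] by (simp add: distrib_right)
  show "- (d \<bullet> (H *v d)) \<le> (\<kappa>H\<^sup>2 / \<zeta> + \<kappa>H) * (norm cv / \<kappa>)\<^sup>2"
    using quadratic_form_normal_bounds(1)[OF H \<zeta>(1) curv, of v] d
      mult_left_mono[OF v2, of "\<kappa>H\<^sup>2 / \<zeta> + \<kappa>H"] \<kappa>H \<zeta>(1) by simp
  show "(norm d)\<^sup>2 \<le> 4 / \<zeta> * max (d \<bullet> (H *v d)) 0
      + (4 / \<zeta> * (2 * \<kappa>H\<^sup>2 / \<zeta> + \<kappa>H) + 2) * (norm cv / \<kappa>)\<^sup>2"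
    using quadratic_form_normal_bounds(2)[OF H \<zeta>(1) curv, of v] d
      mult_left_mono[OF v2, of "4 / \<zeta> * (2 * \<kappa>H\<^sup>2 / \<zeta> + \<kappa>H) + 2"] \<kappa>H \<zeta>(1) by simp
qed

section \<open>Functions with Lipschitz gradient\<close>

lemma has_real_derivative_along_line:
  fixes F :: "'a::real_inner \<Rightarrow> real"
  assumes "(F has_derivative (\<lambda>h. G \<bullet> h)) (at (x + t *\<^sub>R h))"
  shows "((\<lambda>t. F (x + t *\<^sub>R h)) has_real_derivative (G \<bullet> h)) (at t)"
proof -
  have "((\<lambda>t. x + t *\<^sub>R h) has_derivative (\<lambda>s. s *\<^sub>R h)) (at t)"
    by (auto intro!: derivative_eq_intros)
  from diff_chain_at[OF this assms]
  show ?thesis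
    by (simp add: has_field_derivative_def o_def mult_commute_abs)
qed

lemma lipschitz_gradient_upper_bound:
  fixes F :: "'a::real_inner \<Rightarrow> real"
  assumes X: "convex X" and deriv: "\<And>z. z \<in> X \<Longrightarrow> (F has_derivative (\<lambda>h. G z \<bullet> h)) (at z)"
    and lipschitz: "\<And>z w. z \<in> X \<Longrightarrow> w \<in> X \<Longrightarrow> norm (G z - G w) \<le> L * norm (z - w)"
    and x: "x \<in> X" and xh: "x + h \<in> X"
  shows "F (x + h) - F x - G x \<bullet> h \<le> L / 2 * (norm h)\<^sup>2"
proof -
  have segment: "x + t *\<^sub>R h \<in> X" if "0 \<le> t" "t \<le> 1" for t
    using convexD_alt[OF X x xh that] by (simp add: algebra_simps)
  define \<phi> where "\<phi> t = L / 2 * t\<^sup>2 * (norm h)\<^sup>2 - (F (x + t *\<^sub>R h) - F x - t * (G x \<bullet> h))" for t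
  have "\<phi> 0 \<le> \<phi> 1"
  proof (rule DERIV_nonneg_imp_nondecreasing[of 0 1])
    fix t :: real
    assume t: "0 \<le> t" "t \<le> 1"
    have "((\<lambda>t. F (x + t *\<^sub>R h)) has_real_derivative (G (x + t *\<^sub>R h) \<bullet> h)) (at t)"
      using deriv[OF segment[OF t]] by (rule has_real_derivative_along_line)
    then have "(\<phi> has_real_derivative L * t * (norm h)\<^sup>2 - (G (x + t *\<^sub>R h) - G x) \<bullet> h) (at t)"
      unfolding \<phi>_def by (auto intro!: derivative_eq_intros simp: inner_diff_left)
    moreover have "(G (x + t *\<^sub>R h) - G x) \<bullet> h \<le> L * t * (norm h)\<^sup>2"
    proof -
      have "(G (x + t *\<^sub>R h) - G x) \<bullet> h \<le> norm (G (x + t *\<^sub>R h) - G x) * norm h"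
        by (rule norm_cauchy_schwarz)
      also have "\<dots> \<le> L * norm (t *\<^sub>R h) * norm h"
        using lipschitz[OF segment[OF t] x] by (intro mult_right_mono) auto
      finally show ?thesis
        using t by (simp add: power2_eq_square mult.assoc)
    qed
    ultimately show "\<exists>y. (\<phi> has_real_derivative y) (at t) \<and> 0 \<le> y"
      by auto
  qed simp
  then show ?thesis
    by (simp add: \<phi>_def)
qed

lemma lipschitz_gradient_linearization_error:
  fixes F :: "'a::real_inner \<Rightarrow> real"
  assumes X: "convex X" and deriv: "\<And>z. z \<in> X \<Longrightarrow> (F has_derivative (\<lambda>h. G z \<bullet> h)) (at z)"
    and lipschitz: "\<And>z w. z \<in> X \<Longrightarrow> w \<in> X \<Longrightarrow> norm (G z - G w) \<le> L * norm (z - w)"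
    and x: "x \<in> X" and xh: "x + h \<in> X"
  shows "\<bar>F (x + h) - F x - G x \<bullet> h\<bar> \<le> L / 2 * (norm h)\<^sup>2"
proof -
  have "F (x + h) - F x - G x \<bullet> h \<le> L / 2 * (norm h)\<^sup>2"
    using lipschitz_gradient_upper_bound[OF assms] .
  moreover have "- F (x + h) - (- F x) - (- G x) \<bullet> h \<le> L / 2 * (norm h)\<^sup>2"
  proof (rule lipschitz_gradient_upper_bound[OF X _ _ x xh])
    show "((\<lambda>z. - F z) has_derivative (\<lambda>h. (- G z) \<bullet> h)) (at z)" if "z \<in> X" for z
      using has_derivative_minus[OF deriv[OF that]] by simp
    show "norm (- G z - - G w) \<le> L * norm (z - w)" if "z \<in> X" "w \<in> X" for z w
      using lipschitz[OF that] by (simp add: norm_minus_commute add.commute)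
  qed
  ultimately show ?thesis
    unfolding abs_le_iff inner_minus_left by linarith
qed

section \<open>Sufficient decrease and the parameter updates\<close>

lemma l1norm_after_linearized_step:
  fixes c :: "real^'n \<Rightarrow> real^'m" and A :: "real^'n^'m"
  assumes feasibility: "A *v d = - c x"
    and LC: "\<And>i. \<bar>c (x + \<alpha> *\<^sub>R d) $ i\<bar>
               \<le> \<bar>c x $ i + \<alpha> * ((A *v d) $ i)\<bar> + 1/2 * \<Gamma> i * \<alpha>\<^sup>2 * (norm d)\<^sup>2"
  shows "l1norm (c (x + \<alpha> *\<^sub>R d))
           \<le> \<bar>1 - \<alpha>\<bar> * l1norm (c x) + 1/2 * (\<Sum>i\<in>UNIV. \<Gamma> i) * \<alpha>\<^sup>2 * (norm d)\<^sup>2"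
proof -
  have "\<bar>c (x + \<alpha> *\<^sub>R d) $ i\<bar> \<le> \<bar>1 - \<alpha>\<bar> * \<bar>c x $ i\<bar> + 1/2 * \<Gamma> i * \<alpha>\<^sup>2 * (norm d)\<^sup>2" for i
  proof -
    have "c x $ i + \<alpha> * ((A *v d) $ i) = (1 - \<alpha>) * c x $ i"
      using feasibility by (simp add: algebra_simps)
    then show ?thesis
      using LC[of i] by (simp add: abs_mult)
  qed
  then have "l1norm (c (x + \<alpha> *\<^sub>R d))
      \<le> (\<Sum>i\<in>UNIV. \<bar>1 - \<alpha>\<bar> * \<bar>c x $ i\<bar> + 1/2 * \<Gamma> i * \<alpha>\<^sup>2 * (norm d)\<^sup>2)"
    unfolding l1norm_def by (rule sum_mono)
  also have "\<dots> = \<bar>1 - \<alpha>\<bar> * l1norm (c x) + 1/2 * (\<Sum>i\<in>UNIV. \<Gamma> i) * \<alpha>\<^sup>2 * (norm d)\<^sup>2"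
    by (simp add: sum.distrib sum_distrib_left sum_distrib_right l1norm_def)
  finally show ?thesis .
qed

text \<open>The two cases of the stepsize condition are those of the stepsize rule of Algorithm 1.
  In the second one |1 - \<alpha>| exceeds 1, and the growth of the constraint term is paid for
  by the shift 4 |c x|_1.\<close>
lemma suff_dec_of_local_models:
  fixes f :: "real^'n \<Rightarrow> real" and c :: "real^'n \<Rightarrow> real^'m" and A :: "real^'n^'m"
  assumes \<tau>: "0 \<le> \<tau>" and \<alpha>: "0 \<le> \<alpha>"
    and feasibility: "A *v d = - c x"
    and LF: "f (x + \<alpha> *\<^sub>R d) \<le> f x + \<alpha> * (gv \<bullet> d) + 1/2 * L * \<alpha>\<^sup>2 * (norm d)\<^sup>2"
    and LC: "\<And>i. \<bar>c (x + \<alpha> *\<^sub>R d) $ i\<bar>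
               \<le> \<bar>c x $ i + \<alpha> * ((A *v d) $ i)\<bar> + 1/2 * \<Gamma> i * \<alpha>\<^sup>2 * (norm d)\<^sup>2"
    and step: "(\<alpha> \<le> 1 \<and> (\<tau> * L + (\<Sum>i\<in>UNIV. \<Gamma> i)) * \<alpha> * (norm d)\<^sup>2
                             \<le> 2 * (1 - \<eta>) * model_red c x \<tau> gv H d)
             \<or> (1 < \<alpha> \<and> (\<tau> * L + (\<Sum>i\<in>UNIV. \<Gamma> i)) * \<alpha> * (norm d)\<^sup>2
                             = 2 * (1 - \<eta>) * model_red c x \<tau> gv H d - 4 * l1norm (c x))"
  shows "suff_dec f c \<eta> \<tau> x gv H d \<alpha>"
proof -
  define \<Lambda> where "\<Lambda> = \<tau> * L + (\<Sum>i\<in>UNIV. \<Gamma> i)"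
  define D where "D = (norm d)\<^sup>2"
  define l where "l = l1norm (c x)"
  define q where "q = model_red c x \<tau> gv H d"
  define M where "M = max (d \<bullet> (H *v d)) 0"
  have q: "q = l - \<tau> * (gv \<bullet> d) - \<tau> * M / 2"
    by (simp add: q_def model_red_def M_def l_def algebra_simps)
  have "0 \<le> \<alpha> * \<tau> * M"
    using \<alpha> \<tau> by (simp add: M_def)
  have "merit f c \<tau> (x + \<alpha> *\<^sub>R d) \<le> \<tau> * f x + \<tau> * \<alpha> * (gv \<bullet> d) + \<bar>1 - \<alpha>\<bar> * l + \<alpha> / 2 * (\<Lambda> * \<alpha> * D)"
    using mult_left_mono[OF LF \<tau>] l1norm_after_linearized_step[OF feasibility LC]
    unfolding merit_def \<Lambda>_def l_def D_def by (simp add: power2_eq_square algebra_simps)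
  moreover have "\<tau> * \<alpha> * (gv \<bullet> d) + \<bar>1 - \<alpha>\<bar> * l + \<alpha> / 2 * (\<Lambda> * \<alpha> * D) \<le> l - \<eta> * \<alpha> * q"
    using step unfolding \<Lambda>_def[symmetric] D_def[symmetric] q_def[symmetric] l_def[symmetric]
  proof (elim disjE conjE)
    assume "\<alpha> \<le> 1" and "\<Lambda> * \<alpha> * D \<le> 2 * (1 - \<eta>) * q"
    then have "0 \<le> \<alpha> / 2 * (2 * (1 - \<eta>) * q - \<Lambda> * \<alpha> * D)"
      using \<alpha> by simp
    moreover have "l - \<eta> * \<alpha> * q - (\<tau> * \<alpha> * (gv \<bullet> d) + (1 - \<alpha>) * l + \<alpha> / 2 * (\<Lambda> * \<alpha> * D))
        = \<alpha> / 2 * (2 * (1 - \<eta>) * q - \<Lambda> * \<alpha> * D) + \<alpha> * \<tau> * M / 2"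
      by (simp add: q algebra_simps)
    ultimately show ?thesis
      using \<open>\<alpha> \<le> 1\<close> \<open>0 \<le> \<alpha> * \<tau> * M\<close> by simp
  next
    assume "1 < \<alpha>" and "\<Lambda> * \<alpha> * D = 2 * (1 - \<eta>) * q - 4 * l"
    moreover have "l - \<eta> * \<alpha> * q - (\<tau> * \<alpha> * (gv \<bullet> d) + (\<alpha> - 1) * l + \<alpha> / 2 * (2 * (1 - \<eta>) * q - 4 * l))
        = 2 * l + \<alpha> * \<tau> * M / 2"
      by (simp add: q algebra_simps)
    moreover have "0 \<le> l"
      by (simp add: l_def l1norm_nonneg)
    ultimately show ?thesis
      using \<open>0 \<le> \<alpha> * \<tau> * M\<close> by simp
  qed
  ultimately show ?thesis
    unfolding suff_dec_def q_def l_def merit_def by simp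
qed

lemma tau_update_le:
  assumes "0 \<le> \<epsilon>" "\<epsilon> \<le> 1" "\<sigma> \<le> 1" "0 \<le> l"
  shows "tau_update \<epsilon> \<sigma> \<tau>p l gd dHd \<le> \<tau>p"
proof -
  define den where "den = gd + max dHd 0"
  define T where "T = (1 - \<sigma>) * l / den"
  have "0 \<le> T" if "0 < den"
    using assms that by (simp add: T_def)
  then have "(1 - \<epsilon>) * T \<le> T" if "0 < den"
    using assms that by (simp add: mult_left_le_one_le)
  then show ?thesis
    unfolding tau_update_def Let_def den_def[symmetric] T_def[symmetric] by auto
qed

lemma tau_update_mult_le:
  assumes "0 \<le> \<tau>p" "0 \<le> \<epsilon>" "\<epsilon> \<le> 1" "\<sigma> \<le> 1" "0 \<le> l"
  shows "tau_update \<epsilon> \<sigma> \<tau>p l gd dHd * (gd + max dHd 0) \<le> (1 - \<sigma>) * l"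
proof -
  define den where "den = gd + max dHd 0"
  define T where "T = (1 - \<sigma>) * l / den"
  have "\<tau>p * den \<le> (1 - \<sigma>) * l" if "\<tau>p \<le> T \<or> den \<le> 0"
  proof -
    have "T * den = (1 - \<sigma>) * l" if "0 < den"
      using that by (simp add: T_def)
    moreover have "0 \<le> (1 - \<sigma>) * l"
      using assms by simp
    ultimately show ?thesis
      using \<open>\<tau>p \<le> T \<or> den \<le> 0\<close> assms(1)
      by (smt (verit) mult_nonneg_nonpos mult_right_mono)
  qed
  moreover have "(1 - \<epsilon>) * T * den \<le> (1 - \<sigma>) * l" if "0 < den"
    using that assms mult_left_le_one_le[of "(1 - \<sigma>) * l" "1 - \<epsilon>"] by (simp add: T_def)
  ultimately show ?thesis
    unfolding tau_update_def Let_def den_def[symmetric] T_def[symmetric] by auto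
qed

lemma tau_update_ge:
  assumes "\<epsilon> \<le> 1" "\<sigma> \<le> 1" "0 < C" "gd + max dHd 0 \<le> C * l"
  shows "min \<tau>p ((1 - \<epsilon>) * (1 - \<sigma>) / C) \<le> tau_update \<epsilon> \<sigma> \<tau>p l gd dHd"
proof -
  define den where "den = gd + max dHd 0"
  define T where "T = (1 - \<sigma>) * l / den"
  have "(1 - \<epsilon>) * (1 - \<sigma>) / C \<le> (1 - \<epsilon>) * T" if "0 < den"
  proof -
    have "0 < l"
      using that assms(3,4) zero_less_mult_pos[of C l] by (simp add: den_def)
    then have "(1 - \<sigma>) / C = (1 - \<sigma>) * l / (C * l)"
      by simp
    also have "\<dots> \<le> T"
      unfolding T_def using that assms \<open>0 < l\<close> by (intro divide_left_mono) (auto simp: den_def)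
    finally show ?thesis
      using assms(1) mult_left_mono by fastforce
  qed
  then show ?thesis
    unfolding tau_update_def Let_def den_def[symmetric] T_def[symmetric]
    by (auto simp: min_le_iff_disj)
qed

lemma model_red_ge:
  assumes "\<tau> * (gv \<bullet> d + max (d \<bullet> (H *v d)) 0) \<le> (1 - \<sigma>) * l1norm (c x)"
  shows "\<sigma> * l1norm (c x) + \<tau> / 2 * max (d \<bullet> (H *v d)) 0 \<le> model_red c x \<tau> gv H d"
  using assms by (simp add: model_red_def algebra_simps)

lemma alg1_alpha_ge: "min 1 (2 * (1 - \<eta>) * q / (\<Lambda> * D)) \<le> alg1_alpha \<eta> q l \<Lambda> D"
  by (auto simp: alg1_alpha_def Let_def min_def)

lemma alg1_alpha_cases:
  assumes "0 < \<Lambda> * D"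
  shows "(alg1_alpha \<eta> q l \<Lambda> D \<le> 1 \<and> \<Lambda> * alg1_alpha \<eta> q l \<Lambda> D * D \<le> 2 * (1 - \<eta>) * q)
       \<or> (1 < alg1_alpha \<eta> q l \<Lambda> D \<and> \<Lambda> * alg1_alpha \<eta> q l \<Lambda> D * D = 2 * (1 - \<eta>) * q - 4 * l)"
proof -
  define \<alpha>h where "\<alpha>h = 2 * (1 - \<eta>) * q / (\<Lambda> * D)"
  define \<alpha>t where "\<alpha>t = \<alpha>h - 4 * l / (\<Lambda> * D)"
  have "\<Lambda> \<noteq> 0" "D \<noteq> 0"
    using assms by auto
  then have \<alpha>h: "\<Lambda> * \<alpha>h * D = 2 * (1 - \<eta>) * q"
    by (simp add: \<alpha>h_def)
  have "\<Lambda> * \<alpha>t * D = \<Lambda> * \<alpha>h * D - 4 * l"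
    using \<open>\<Lambda> \<noteq> 0\<close> \<open>D \<noteq> 0\<close> by (simp add: \<alpha>t_def field_simps)
  with \<alpha>h have \<alpha>t: "\<Lambda> * \<alpha>t * D = 2 * (1 - \<eta>) * q - 4 * l"
    by simp
  have "\<Lambda> * 1 * D \<le> \<Lambda> * \<alpha>h * D" if "1 \<le> \<alpha>h"
    using assms that mult_right_mono[OF that, of "\<Lambda> * D"] by (simp add: mult_ac)
  then show ?thesis
    using \<alpha>h \<alpha>t unfolding alg1_alpha_def Let_def \<alpha>h_def[symmetric] \<alpha>t_def[symmetric] by auto
qed

lemma rho_update_bounded:
  fixes E E0 B \<rho> :: real
  assumes "0 < E" "E \<le> max E0 (\<rho> * B)" "1 < \<rho>" "\<not> P \<Longrightarrow> E < B"
  shows "0 < (if P then E else \<rho> * E) \<and> (if P then E else \<rho> * E) \<le> max E0 (\<rho> * B)"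
  using assms by (auto simp: le_max_iff_disj)

lemma summable_of_telescoping_bound:
  fixes q \<psi> :: "nat \<Rightarrow> real"
  assumes q: "\<And>k. 0 \<le> q k" and \<psi>: "\<And>k. 0 \<le> \<psi> k" and decrease: "\<And>k. \<psi> (Suc k) + q k \<le> \<psi> k"
  shows "summable q"
proof (rule summableI_nonneg_bounded[OF q])
  fix n
  have "(\<Sum>k<n. q k) \<le> \<psi> 0 - \<psi> n"
  proof (induction n)
    case (Suc n)
    then show ?case
      using decrease[of n] by simp
  qed simp
  then show "(\<Sum>k<n. q k) \<le> \<psi> 0"
    using \<psi>[of n] by linarith
qed

section \<open>The problem and the common iteration\<close>

locale smooth_problem =
  fixes X :: "(real^'n) set" and f :: "real^'n \<Rightarrow> real" and g :: "real^'n \<Rightarrow> real^'n"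
    and c :: "real^'n \<Rightarrow> real^'m" and J :: "real^'n \<Rightarrow> real^'n^'m"
    and Lg :: real and \<gamma> :: "'m \<Rightarrow> real"
  assumes convex_X: "convex X"
    and f_deriv: "\<And>z. z \<in> X \<Longrightarrow> (f has_derivative (\<lambda>h. g z \<bullet> h)) (at z)"
    and g_lipschitz: "\<And>z w. z \<in> X \<Longrightarrow> w \<in> X \<Longrightarrow> norm (g z - g w) \<le> Lg * norm (z - w)"
    and c_deriv: "\<And>z. z \<in> X \<Longrightarrow> (c has_derivative (\<lambda>h. J z *v h)) (at z)"
    and J_lipschitz:
      "\<And>i z w. z \<in> X \<Longrightarrow> w \<in> X \<Longrightarrow> norm (J z $ i - J w $ i) \<le> \<gamma> i * norm (z - w)"
begin

lemma f_local_model: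
  assumes "z \<in> X" "z + t *\<^sub>R h \<in> X" "Lg \<le> L"
  shows "f (z + t *\<^sub>R h) \<le> f z + t * (g z \<bullet> h) + 1/2 * L * t\<^sup>2 * (norm h)\<^sup>2"
proof -
  have "\<bar>f (z + t *\<^sub>R h) - f z - g z \<bullet> (t *\<^sub>R h)\<bar> \<le> Lg / 2 * (norm (t *\<^sub>R h))\<^sup>2"
    using lipschitz_gradient_linearization_error[OF convex_X f_deriv g_lipschitz assms(1,2)] .
  moreover have "Lg / 2 * (norm (t *\<^sub>R h))\<^sup>2 \<le> 1/2 * L * t\<^sup>2 * (norm h)\<^sup>2"
    using mult_right_mono[OF assms(3), of "t\<^sup>2 * (norm h)\<^sup>2"] by (simp add: power_mult_distrib)
  ultimately show ?thesis
    unfolding abs_le_iff by simp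
qed

lemma c_component_local_model:
  assumes "z \<in> X" "z + t *\<^sub>R h \<in> X" "\<gamma> i \<le> \<Gamma>"
  shows "\<bar>c (z + t *\<^sub>R h) $ i\<bar> \<le> \<bar>c z $ i + t * ((J z *v h) $ i)\<bar> + 1/2 * \<Gamma> * t\<^sup>2 * (norm h)\<^sup>2"
proof -
  have deriv: "((\<lambda>z. c z $ i) has_derivative (\<lambda>h. J z $ i \<bullet> h)) (at z)" if "z \<in> X" for z
    using bounded_linear.has_derivative[OF bounded_linear_vec_nth c_deriv[OF that]]
    by (simp add: matrix_vector_mul_component)
  have "\<bar>c (z + t *\<^sub>R h) $ i - c z $ i - J z $ i \<bullet> (t *\<^sub>R h)\<bar> \<le> \<gamma> i / 2 * (norm (t *\<^sub>R h))\<^sup>2"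
    using lipschitz_gradient_linearization_error[OF convex_X deriv J_lipschitz assms(1,2)] .
  moreover have "J z $ i \<bullet> (t *\<^sub>R h) = t * ((J z *v h) $ i)"
    by (simp add: matrix_vector_mul_component)
  moreover have "\<gamma> i / 2 * (norm (t *\<^sub>R h))\<^sup>2 \<le> 1/2 * \<Gamma> * t\<^sup>2 * (norm h)\<^sup>2"
    using mult_right_mono[OF assms(3), of "t\<^sup>2 * (norm h)\<^sup>2"] by (simp add: power_mult_distrib)
  ultimately show ?thesis
    unfolding abs_le_iff by linarith
qed

lemma suff_dec_of_short_step:
  assumes "z \<in> X" "z + t *\<^sub>R h \<in> X" "0 \<le> t" "t \<le> 1" "0 \<le> \<tau>" "J z *v h = - c z"
    and "Lg \<le> L" "\<And>i. \<gamma> i \<le> \<Gamma> i"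
    and "(\<tau> * L + (\<Sum>i\<in>UNIV. \<Gamma> i)) * t * (norm h)\<^sup>2 \<le> 2 * (1 - \<eta>) * model_red c z \<tau> (g z) H h"
  shows "suff_dec f c \<eta> \<tau> z (g z) H h t"
proof (rule suff_dec_of_local_models[where L = L and \<Gamma> = \<Gamma>])
  show "\<bar>c (z + t *\<^sub>R h) $ i\<bar> \<le> \<bar>c z $ i + t * ((J z *v h) $ i)\<bar> + 1/2 * \<Gamma> i * t\<^sup>2 * (norm h)\<^sup>2"
    for i
    using c_component_local_model assms(1,2,8) .
qed (use assms f_local_model in auto)

end

locale sqp_setting = smooth_problem X f g c J Lg \<gamma>
  for X :: "(real^'n) set" and f g and c :: "real^'n \<Rightarrow> real^'m" and J Lg \<gamma> +
  fixes H :: "nat \<Rightarrow> real^'n^'n" and x d :: "nat \<Rightarrow> real^'n" and y :: "nat \<Rightarrow> real^'m"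
    and \<tau> \<alpha> :: "nat \<Rightarrow> real" and \<tau>init \<epsilon> \<sigma> \<eta> :: real
    and Bg Bc \<kappa>J \<kappa>H \<zeta> :: real
  assumes params: "0 < \<tau>init" "0 < \<epsilon>" "\<epsilon> < 1" "0 < \<sigma>" "\<sigma> < 1" "0 < \<eta>" "\<eta> < 1"
    and iterates_in_X: "\<And>k. x k \<in> X"
    and f_bdd_below: "bdd_below (f ` X)"
    and g_bounded: "\<And>z. z \<in> X \<Longrightarrow> norm (g z) \<le> Bg"
    and c_bounded: "\<And>z. z \<in> X \<Longrightarrow> norm (c z) \<le> Bc"
    and J_sing_vals: "0 < \<kappa>J" "\<And>z. z \<in> X \<Longrightarrow> sing_vals_ge \<kappa>J (J z)"
    and H_bounded: "\<And>k. onorm (\<lambda>v. H k *v v) \<le> \<kappa>H"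
    and H_curvature: "0 < \<zeta>" "\<And>k u. J (x k) *v u = 0 \<Longrightarrow> \<zeta> * (norm u)\<^sup>2 \<le> u \<bullet> (H k *v u)"
    and common: "sqp_common g c J H x d y \<tau> \<alpha> \<tau>init \<epsilon> \<sigma>"
begin

abbreviation "model_reduction k \<equiv> model_red c (x k) (\<tau> k) (g (x k)) (H k) (d k)"

abbreviation "sufficient_decrease k t \<equiv> suff_dec f c \<eta> (\<tau> k) (x k) (g (x k)) (H k) (d k) t"

lemma
  shows stationarity: "H k *v d k + transpose (J (x k)) *v y k = - g (x k)"
    and feasibility: "J (x k) *v d k = - c (x k)"
    and not_stationary: "\<not> (g (x k) + transpose (J (x k)) *v y k = 0 \<and> c (x k) = 0)"
    and tau_recursion: "\<tau> k = tau_update \<epsilon> \<sigma> (if k = 0 then \<tau>init else \<tau> (k - 1))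
                          (l1norm (c (x k))) (g (x k) \<bullet> d k) (d k \<bullet> (H k *v d k))"
    and iterate_Suc: "x (Suc k) = x k + \<alpha> k *\<^sub>R d k"
  using common unfolding sqp_common_def by blast+

lemma step_nonzero: "d k \<noteq> 0"
  using not_stationary[of k] stationarity[of k] feasibility[of k] by auto

lemma Bc_nonneg: "0 \<le> Bc"
  using c_bounded[OF iterates_in_X[of 0]] by (meson norm_ge_zero order_trans)

lemma \<kappa>H_nonneg: "0 \<le> \<kappa>H"
  using onorm_pos_le[OF matrix_vector_mul_bounded_linear] H_bounded by (rule order_trans)

lemmas newton_bounds = newton_step_bounds[OF J_sing_vals(1) J_sing_vals(2)[OF iterates_in_X]
    H_bounded H_curvature stationarity feasibility]

lemma normal_component_sq_le: "(norm (c (x k)) / \<kappa>J)\<^sup>2 \<le> Bc / \<kappa>J\<^sup>2 * norm (c (x k))"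
proof -
  have "(norm (c (x k)) / \<kappa>J)\<^sup>2 = norm (c (x k)) * norm (c (x k)) / \<kappa>J\<^sup>2"
    by (simp add: power_divide power2_eq_square)
  also have "\<dots> \<le> Bc * norm (c (x k)) / \<kappa>J\<^sup>2"
    using c_bounded[OF iterates_in_X[of k]] by (intro divide_right_mono mult_right_mono) auto
  finally show ?thesis
    by simp
qed

lemma step_bounded: "norm (d k) \<le> (Bg + (\<kappa>H + \<zeta>) * (Bc / \<kappa>J)) / \<zeta>"
proof -
  have "(\<kappa>H + \<zeta>) * (norm (c (x k)) / \<kappa>J) \<le> (\<kappa>H + \<zeta>) * (Bc / \<kappa>J)"
    using \<kappa>H_nonneg H_curvature(1) J_sing_vals(1) c_bounded[OF iterates_in_X[of k]]
    by (intro mult_left_mono divide_right_mono) auto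
  then have "\<zeta> * norm (d k) \<le> Bg + (\<kappa>H + \<zeta>) * (Bc / \<kappa>J)"
    using newton_bounds(1)[of k] g_bounded[OF iterates_in_X[of k]] by linarith
  then show ?thesis
    using H_curvature(1) by (simp add: pos_le_divide_eq mult.commute)
qed

lemma multiplier_bounded:
  obtains B where "\<And>k. norm (y k) \<le> B"
proof
  define Bd where "Bd = (Bg + (\<kappa>H + \<zeta>) * (Bc / \<kappa>J)) / \<zeta>"
  fix k
  have "\<kappa>J * norm (y k) \<le> norm (transpose (J (x k)) *v y k)"
    using J_sing_vals(2)[OF iterates_in_X] unfolding sing_vals_ge_def by blast
  also have "\<dots> = norm (- g (x k) - H k *v d k)"
    using stationarity[of k] by (metis add_diff_cancel_left')
  also have "\<dots> \<le> Bg + \<kappa>H * Bd"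
    using norm_triangle_ineq4[of "- g (x k)" "H k *v d k"] norm_minus_cancel[of "g (x k)"] g_bounded[OF iterates_in_X[of k]]
      norm_matrix_vector_le[OF H_bounded, of k "d k"] mult_left_mono[OF step_bounded[of k] \<kappa>H_nonneg]
    unfolding Bd_def by linarith
  finally show "norm (y k) \<le> (Bg + \<kappa>H * Bd) / \<kappa>J"
    using J_sing_vals(1) by (simp add: field_simps)
qed

lemma curvature_bounded_below:
  obtains C where "0 \<le> C" "\<And>k. - (d k \<bullet> (H k *v d k)) \<le> C * norm (c (x k))"
proof
  show "0 \<le> (\<kappa>H\<^sup>2 / \<zeta> + \<kappa>H) * (Bc / \<kappa>J\<^sup>2)"
    using \<kappa>H_nonneg H_curvature(1) Bc_nonneg by simp
  show "- (d k \<bullet> (H k *v d k)) \<le> (\<kappa>H\<^sup>2 / \<zeta> + \<kappa>H) * (Bc / \<kappa>J\<^sup>2) * norm (c (x k))" for k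
    using newton_bounds(2)[of k] mult_left_mono[OF normal_component_sq_le[of k], of "\<kappa>H\<^sup>2 / \<zeta> + \<kappa>H"]
      \<kappa>H_nonneg H_curvature(1) by (simp add: mult.assoc)
qed

lemma step_sq_bound:
  obtains C where "0 \<le> C"
    "\<And>k. (norm (d k))\<^sup>2 \<le> 4 / \<zeta> * max (d k \<bullet> (H k *v d k)) 0 + C * norm (c (x k))"
proof
  define C0 where "C0 = 4 / \<zeta> * (2 * \<kappa>H\<^sup>2 / \<zeta> + \<kappa>H) + 2"
  have "0 \<le> C0"
    using \<kappa>H_nonneg H_curvature(1) by (simp add: C0_def)
  then show "0 \<le> C0 * (Bc / \<kappa>J\<^sup>2)"
    using Bc_nonneg by simp
  show "(norm (d k))\<^sup>2 \<le> 4 / \<zeta> * max (d k \<bullet> (H k *v d k)) 0 + C0 * (Bc / \<kappa>J\<^sup>2) * norm (c (x k))"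
    for k
    using newton_bounds(3)[of k] mult_left_mono[OF normal_component_sq_le[of k] \<open>0 \<le> C0\<close>]
    unfolding C0_def by (simp add: mult.assoc)
qed

lemma inner_gradient_step: "g (x k) \<bullet> d k = y k \<bullet> c (x k) - d k \<bullet> (H k *v d k)"
proof -
  have "(H k *v d k) \<bullet> d k + (transpose (J (x k)) *v y k) \<bullet> d k = - (g (x k) \<bullet> d k)"
    using arg_cong[OF stationarity[of k], of "\<lambda>v. v \<bullet> d k"]
    by (simp only: inner_add_left inner_minus_left)
  moreover have "(transpose (J (x k)) *v y k) \<bullet> d k = - (y k \<bullet> c (x k))"
    by (simp only: inner_transpose_mult feasibility inner_minus_right)
  ultimately show ?thesis
    using inner_commute[of "H k *v d k" "d k"] by linarith
qed

lemma tau_denominator_bounded: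
  obtains C where "0 < C"
    "\<And>k. g (x k) \<bullet> d k + max (d k \<bullet> (H k *v d k)) 0 \<le> C * l1norm (c (x k))"
proof -
  obtain By where By: "\<And>k. norm (y k) \<le> By"
    using multiplier_bounded by blast
  obtain Cn where Cn: "0 \<le> Cn" "\<And>k. - (d k \<bullet> (H k *v d k)) \<le> Cn * norm (c (x k))"
    using curvature_bounded_below by blast
  have "0 \<le> By"
    using By[of 0] norm_ge_zero order_trans by blast
  then have "0 < By + Cn + 1"
    using Cn(1) by simp
  moreover have "g (x k) \<bullet> d k + max (d k \<bullet> (H k *v d k)) 0 \<le> (By + Cn + 1) * l1norm (c (x k))"
    for k
  proof -
    have "y k \<bullet> c (x k) \<le> By * norm (c (x k))"
      using norm_cauchy_schwarz[of "y k" "c (x k)"] mult_right_mono[OF By[of k] norm_ge_zero[of "c (x k)"]]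
      by linarith
    moreover have "0 \<le> Cn * norm (c (x k))"
      using Cn(1) by simp
    ultimately have "g (x k) \<bullet> d k + max (d k \<bullet> (H k *v d k)) 0 \<le> (By + Cn) * norm (c (x k))"
      using Cn(2)[of k] inner_gradient_step[of k] by (simp add: max_def distrib_right)
    also have "\<dots> \<le> (By + Cn + 1) * l1norm (c (x k))"
      using norm_le_l1norm[of "c (x k)"] l1norm_nonneg[of "c (x k)"] \<open>0 \<le> By\<close> Cn(1)
      by (intro mult_mono) auto
    finally show ?thesis .
  qed
  ultimately show thesis
    by (rule that)
qed

lemma tau_le_prev: "\<tau> k \<le> (if k = 0 then \<tau>init else \<tau> (k - 1))"
  using params by (subst tau_recursion) (simp add: tau_update_le l1norm_nonneg)

lemma tau_decreasing: "\<tau> (Suc k) \<le> \<tau> k"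
  using tau_le_prev[of "Suc k"] by simp

lemma tau_le_init: "\<tau> k \<le> \<tau>init"
proof (induction k)
  case 0
  show ?case
    using tau_le_prev[of 0] by simp
next
  case (Suc k)
  then show ?case
    using tau_decreasing[of k] by linarith
qed

text \<open>The merit parameter is reduced only when the denominator of its trial value is positive,
  and the bound on that denominator keeps every trial value above (1 - \<sigma>) / C.\<close>
lemma tau_bounded_below:
  obtains \<tau>min where "0 < \<tau>min" "\<And>k. \<tau>min \<le> \<tau> k"
proof -
  obtain C where C: "0 < C"
    "\<And>k. g (x k) \<bullet> d k + max (d k \<bullet> (H k *v d k)) 0 \<le> C * l1norm (c (x k))"
    using tau_denominator_bounded by blast
  define \<tau>min where "\<tau>min = min \<tau>init ((1 - \<epsilon>) * (1 - \<sigma>) / C)"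
  have step: "min (if k = 0 then \<tau>init else \<tau> (k - 1)) ((1 - \<epsilon>) * (1 - \<sigma>) / C) \<le> \<tau> k" for k
    using tau_update_ge[OF _ _ C(1) C(2)[of k]] params tau_recursion[of k] by simp
  have "0 < \<tau>min"
    using params C(1) by (simp add: \<tau>min_def)
  moreover have "\<tau>min \<le> \<tau> k" for k
  proof (induction k)
    case 0
    show ?case
      using step[of 0] by (simp add: \<tau>min_def)
  next
    case (Suc k)
    then show ?case
      using step[of "Suc k"] by (simp add: \<tau>min_def)
  qed
  ultimately show thesis
    by (rule that)
qed

lemma tau_pos: "0 < \<tau> k"
  using tau_bounded_below by (metis order_less_le_trans)

lemma model_reduction_lower_bound:
  "\<sigma> * l1norm (c (x k)) + \<tau> k / 2 * max (d k \<bullet> (H k *v d k)) 0 \<le> model_reduction k"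
proof (rule model_red_ge)
  have "0 \<le> (if k = 0 then \<tau>init else \<tau> (k - 1))"
    using params tau_pos[of "k - 1"] by simp
  then show "\<tau> k * (g (x k) \<bullet> d k + max (d k \<bullet> (H k *v d k)) 0) \<le> (1 - \<sigma>) * l1norm (c (x k))"
    unfolding tau_recursion[of k]
    by (rule tau_update_mult_le) (use params in \<open>auto simp: l1norm_nonneg\<close>)
qed

lemma model_reduction_ge_feasibility: "\<sigma> * norm (c (x k)) \<le> model_reduction k"
proof -
  have "\<sigma> * norm (c (x k)) \<le> \<sigma> * l1norm (c (x k))"
    using params norm_le_l1norm by (intro mult_left_mono) auto
  moreover have "0 \<le> \<tau> k / 2 * max (d k \<bullet> (H k *v d k)) 0"
    using tau_pos[of k] by simp
  ultimately show ?thesis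
    using model_reduction_lower_bound[of k] by linarith
qed

lemma model_reduction_nonneg: "0 \<le> model_reduction k"
  using model_reduction_ge_feasibility[of k] params by (smt (verit) mult_nonneg_nonneg norm_ge_zero)

lemma model_reduction_ge_step:
  obtains \<kappa>q where "0 < \<kappa>q" "\<And>k. \<kappa>q * (norm (d k))\<^sup>2 \<le> model_reduction k"
proof -
  obtain \<tau>min where \<tau>min: "0 < \<tau>min" "\<And>k. \<tau>min \<le> \<tau> k"
    using tau_bounded_below by blast
  obtain C where C: "0 \<le> C"
    "\<And>k. (norm (d k))\<^sup>2 \<le> 4 / \<zeta> * max (d k \<bullet> (H k *v d k)) 0 + C * norm (c (x k))"
    using step_sq_bound by blast
  define \<kappa>q where "\<kappa>q = min (\<sigma> / (C + 1)) (\<tau>min * \<zeta> / 8)"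
  have "0 < \<kappa>q"
    using params C(1) \<tau>min(1) H_curvature(1) by (simp add: \<kappa>q_def)
  moreover have "\<kappa>q * (norm (d k))\<^sup>2 \<le> model_reduction k" for k
  proof -
    define M where "M = max (d k \<bullet> (H k *v d k)) 0"
    have "\<kappa>q * 4 / \<zeta> \<le> \<tau>min / 2"
      using H_curvature(1) min.cobounded2[of "\<sigma> / (C + 1)" "\<tau>min * \<zeta> / 8"]
      by (simp add: \<kappa>q_def field_simps)
    then have "\<kappa>q * 4 / \<zeta> \<le> \<tau> k / 2"
      using \<tau>min(2)[of k] by linarith
    have "\<kappa>q * C \<le> \<sigma> / (C + 1) * C"
      using C(1) by (intro mult_right_mono) (simp_all add: \<kappa>q_def)
    also have "\<dots> \<le> \<sigma>"
      using C(1) params by (simp add: field_simps)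
    finally have "\<kappa>q * C \<le> \<sigma>" .
    have "\<kappa>q * (norm (d k))\<^sup>2 \<le> \<kappa>q * (4 / \<zeta> * M + C * norm (c (x k)))"
      using C(2)[of k] \<open>0 < \<kappa>q\<close> unfolding M_def by (intro mult_left_mono) auto
    also have "\<dots> = \<kappa>q * 4 / \<zeta> * M + \<kappa>q * C * norm (c (x k))"
      by (simp add: algebra_simps)
    also have "\<dots> \<le> \<tau> k / 2 * M + \<sigma> * l1norm (c (x k))"
      using \<open>\<kappa>q * 4 / \<zeta> \<le> \<tau> k / 2\<close> \<open>\<kappa>q * C \<le> \<sigma>\<close> norm_le_l1norm[of "c (x k)"] params
        tau_pos[of k]
      by (intro add_mono mult_mono) (auto simp: M_def)
    also have "\<dots> \<le> model_reduction k"
      using model_reduction_lower_bound[of k] by (simp add: M_def)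
    finally show ?thesis .
  qed
  ultimately show thesis
    by (rule that)
qed

lemma model_reduction_pos: "0 < model_reduction k"
proof -
  obtain \<kappa>q where "0 < \<kappa>q" "\<kappa>q * (norm (d k))\<^sup>2 \<le> model_reduction k"
    using model_reduction_ge_step by blast
  with step_nonzero[of k] show ?thesis
    by (smt (verit) mult_pos_pos zero_less_norm_iff zero_less_power)
qed

lemma merit_decrease:
  assumes flow: "\<And>z. z \<in> X \<Longrightarrow> flow \<le> f z"
    and "\<alpha>min \<le> \<alpha> k" and "sufficient_decrease k (\<alpha> k)"
  shows "merit f c (\<tau> (Suc k)) (x (Suc k)) - \<tau> (Suc k) * flow + \<eta> * \<alpha>min * model_reduction k
           \<le> merit f c (\<tau> k) (x k) - \<tau> k * flow"
proof -
  have "\<tau> (Suc k) * (f (x (Suc k)) - flow) \<le> \<tau> k * (f (x (Suc k)) - flow)"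
    using tau_decreasing flow[OF iterates_in_X] by (intro mult_right_mono) auto
  then have "merit f c (\<tau> (Suc k)) (x (Suc k)) - \<tau> (Suc k) * flow
      \<le> merit f c (\<tau> k) (x (Suc k)) - \<tau> k * flow"
    unfolding merit_def by (simp add: algebra_simps)
  moreover have "merit f c (\<tau> k) (x (Suc k)) \<le> merit f c (\<tau> k) (x k) - \<eta> * \<alpha> k * model_reduction k"
    using assms(3) iterate_Suc[of k] unfolding suff_dec_def by simp
  moreover have "\<eta> * \<alpha>min * model_reduction k \<le> \<eta> * \<alpha> k * model_reduction k"
    using params assms(2) model_reduction_nonneg by (intro mult_right_mono mult_left_mono) auto
  ultimately show ?thesis
    by linarith
qed

lemma model_reduction_tendsto_zero:
  assumes "0 < \<alpha>min" "\<And>k. \<alpha>min \<le> \<alpha> k" "\<And>k. sufficient_decrease k (\<alpha> k)"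
  shows "(\<lambda>k. model_reduction k) \<longlonglongrightarrow> 0"
proof -
  obtain flow where flow: "\<And>z. z \<in> X \<Longrightarrow> flow \<le> f z"
    using f_bdd_below by (auto simp: bdd_below_def)
  have "summable (\<lambda>k. \<eta> * \<alpha>min * model_reduction k)"
  proof (rule summable_of_telescoping_bound[where \<psi> = "\<lambda>k. merit f c (\<tau> k) (x k) - \<tau> k * flow"])
    show "0 \<le> \<eta> * \<alpha>min * model_reduction k" for k
      using params assms(1) model_reduction_nonneg by simp
    show "0 \<le> merit f c (\<tau> k) (x k) - \<tau> k * flow" for k
    proof -
      have "0 \<le> \<tau> k * (f (x k) - flow)"
        using tau_pos[of k] flow[OF iterates_in_X] by simp
      then show ?thesis
        using l1norm_nonneg[of "c (x k)"] by (simp add: merit_def right_diff_distrib)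
    qed
  qed (use merit_decrease[OF flow assms(2,3)] in simp)
  then have "summable (\<lambda>k. model_reduction k)"
    using params assms(1) by (simp add: mult.assoc)
  then show ?thesis
    by (rule summable_LIMSEQ_zero)
qed

lemma kkt_residuals_tendsto_zero:
  assumes "(\<lambda>k. model_reduction k) \<longlonglongrightarrow> 0"
  shows "(\<lambda>k. norm (d k)) \<longlonglongrightarrow> 0
       \<and> (\<lambda>k. norm (c (x k))) \<longlonglongrightarrow> 0
       \<and> (\<lambda>k. norm (g (x k) + transpose (J (x k)) *v y k)) \<longlonglongrightarrow> 0"
proof (intro conjI)
  obtain \<kappa>q where \<kappa>q: "0 < \<kappa>q" "\<And>k. \<kappa>q * (norm (d k))\<^sup>2 \<le> model_reduction k"
    using model_reduction_ge_step by blast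
  show d: "(\<lambda>k. norm (d k)) \<longlonglongrightarrow> 0"
  proof (rule Lim_null_comparison)
    show "\<forall>\<^sub>F k in sequentially. norm (norm (d k)) \<le> sqrt (model_reduction k / \<kappa>q)"
      using \<kappa>q by (intro always_eventually allI real_le_rsqrt) (simp add: field_simps)
    show "(\<lambda>k. sqrt (model_reduction k / \<kappa>q)) \<longlonglongrightarrow> 0"
      using tendsto_real_sqrt[OF tendsto_divide_zero[OF assms]] by simp
  qed
  show "(\<lambda>k. norm (c (x k))) \<longlonglongrightarrow> 0"
  proof (rule Lim_null_comparison)
    show "\<forall>\<^sub>F k in sequentially. norm (norm (c (x k))) \<le> model_reduction k / \<sigma>"
      using model_reduction_ge_feasibility params
      by (intro always_eventually allI) (simp add: field_simps)
    show "(\<lambda>k. model_reduction k / \<sigma>) \<longlonglongrightarrow> 0"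
      using tendsto_divide_zero[OF assms] .
  qed
  show "(\<lambda>k. norm (g (x k) + transpose (J (x k)) *v y k)) \<longlonglongrightarrow> 0"
  proof (rule Lim_null_comparison)
    have "g (x k) + transpose (J (x k)) *v y k = - (H k *v d k)" for k
      using stationarity[of k] by (metis add.commute add_diff_cancel_left' diff_conv_add_uminus minus_minus)
    then show "\<forall>\<^sub>F k in sequentially. norm (norm (g (x k) + transpose (J (x k)) *v y k)) \<le> \<kappa>H * norm (d k)"
      using norm_matrix_vector_le[OF H_bounded] by (intro always_eventually allI) simp
    show "(\<lambda>k. \<kappa>H * norm (d k)) \<longlonglongrightarrow> 0"
      using tendsto_mult_right_zero[OF d] .
  qed
qed

end

section \<open>Stepsizes of the two algorithms\<close>

locale sqp_alg2 = sqp_setting +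
  fixes \<nu> \<alpha>0 :: real
  assumes \<nu>: "0 < \<nu>" "\<nu> < 1" and \<alpha>0: "0 < \<alpha>0"
    and backtracking: "alg2 f g c H x d \<tau> \<alpha> \<eta> \<nu> \<alpha>0"
    and trials_in_X: "\<And>k j. \<forall>i < j. \<not> suff_dec f c \<eta> (\<tau> k) (x k) (g (x k)) (H k) (d k) (\<nu> ^ i * \<alpha>0)
                        \<Longrightarrow> x k + (\<nu> ^ j * \<alpha>0) *\<^sub>R d k \<in> X"
begin

lemma short_trial_suff_dec:
  obtains tmin where "0 < tmin"
    "\<And>k t. x k + t *\<^sub>R d k \<in> X \<Longrightarrow> 0 \<le> t \<Longrightarrow> t \<le> tmin \<Longrightarrow> sufficient_decrease k t"
proof -
  obtain \<kappa>q where \<kappa>q: "0 < \<kappa>q" "\<And>k. \<kappa>q * (norm (d k))\<^sup>2 \<le> model_reduction k"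
    using model_reduction_ge_step by blast
  define \<Lambda> where "\<Lambda> = \<tau>init * (\<bar>Lg\<bar> + 1) + (\<Sum>i\<in>UNIV. \<bar>\<gamma> i\<bar>)"
  have "0 < \<Lambda>"
    using params(1) by (simp add: \<Lambda>_def add_pos_nonneg sum_nonneg)
  define tmin where "tmin = min 1 (2 * (1 - \<eta>) * \<kappa>q / \<Lambda>)"
  have "0 < tmin"
    using \<open>0 < \<Lambda>\<close> \<kappa>q(1) params by (simp add: tmin_def)
  moreover have "sufficient_decrease k t" if "x k + t *\<^sub>R d k \<in> X" "0 \<le> t" "t \<le> tmin" for k t
  proof (rule suff_dec_of_short_step[where L = "\<bar>Lg\<bar> + 1" and \<Gamma> = "\<lambda>i. \<bar>\<gamma> i\<bar>"])
    have "\<tau> k * (\<bar>Lg\<bar> + 1) + (\<Sum>i\<in>UNIV. \<bar>\<gamma> i\<bar>) \<le> \<Lambda>"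
      using tau_le_init[of k] by (simp add: \<Lambda>_def mult_right_mono)
    then have "(\<tau> k * (\<bar>Lg\<bar> + 1) + (\<Sum>i\<in>UNIV. \<bar>\<gamma> i\<bar>)) * t \<le> \<Lambda> * t"
      using that(2) by (rule mult_right_mono)
    also have "\<dots> \<le> 2 * (1 - \<eta>) * \<kappa>q"
      using that(3) \<open>0 < \<Lambda>\<close> by (simp add: tmin_def field_simps)
    finally have "(\<tau> k * (\<bar>Lg\<bar> + 1) + (\<Sum>i\<in>UNIV. \<bar>\<gamma> i\<bar>)) * t * (norm (d k))\<^sup>2
        \<le> 2 * (1 - \<eta>) * \<kappa>q * (norm (d k))\<^sup>2"
      by (rule mult_right_mono) simp
    also have "\<dots> = 2 * (1 - \<eta>) * (\<kappa>q * (norm (d k))\<^sup>2)"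
      by (simp only: mult.assoc)
    also have "\<dots> \<le> 2 * (1 - \<eta>) * model_reduction k"
      using \<kappa>q(2) params by (intro mult_left_mono) auto
    finally show "(\<tau> k * (\<bar>Lg\<bar> + 1) + (\<Sum>i\<in>UNIV. \<bar>\<gamma> i\<bar>)) * t * (norm (d k))\<^sup>2
        \<le> 2 * (1 - \<eta>) * model_reduction k" .
  qed (use that iterates_in_X tau_pos less_imp_le feasibility tmin_def in auto)
  ultimately show thesis
    by (rule that)
qed

lemma stepsize_bounded:
  obtains \<alpha>min where "0 < \<alpha>min" "\<And>k. \<alpha>min \<le> \<alpha> k" "\<And>k. sufficient_decrease k (\<alpha> k)"
proof -
  obtain tmin where tmin: "0 < tmin"
    "\<And>k t. x k + t *\<^sub>R d k \<in> X \<Longrightarrow> 0 \<le> t \<Longrightarrow> t \<le> tmin \<Longrightarrow> sufficient_decrease k t"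
    using short_trial_suff_dec by blast
  have "min \<alpha>0 (\<nu> * tmin) \<le> \<alpha> k \<and> sufficient_decrease k (\<alpha> k)" for k
  proof -
    obtain j where j: "\<alpha> k = \<nu> ^ j * \<alpha>0" "sufficient_decrease k (\<nu> ^ j * \<alpha>0)"
      "\<forall>i < j. \<not> sufficient_decrease k (\<nu> ^ i * \<alpha>0)"
      using backtracking unfolding alg2_def by blast
    show ?thesis
    proof (cases j)
      case 0
      then show ?thesis
        using j by simp
    next
      case (Suc i)
      have "tmin < \<nu> ^ i * \<alpha>0"
      proof (rule ccontr)
        assume "\<not> tmin < \<nu> ^ i * \<alpha>0"
        then have "sufficient_decrease k (\<nu> ^ i * \<alpha>0)"
          using j(3) Suc \<nu> \<alpha>0 by (intro tmin(2) trials_in_X) auto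
        then show False
          using j(3) Suc by auto
      qed
      then show ?thesis
        using j Suc \<nu> mult_strict_left_mono[of tmin "\<nu> ^ i * \<alpha>0" \<nu>] by (simp add: min_le_iff_disj)
    qed
  qed
  moreover have "0 < min \<alpha>0 (\<nu> * tmin)"
    using \<alpha>0 \<nu> tmin(1) by simp
  ultimately show thesis
    using that by blast
qed

end

locale sqp_alg1 = sqp_setting +
  fixes \<rho> Linit :: real and Ginit Lk Gk and jk :: "nat \<Rightarrow> nat"
  assumes \<rho>: "1 < \<rho>" and Linit: "0 < Linit" and Ginit: "\<And>i. 0 < Ginit i"
    and adaptive: "alg1 f g c J H x d \<tau> \<alpha> \<eta> \<rho> Linit Ginit Lk Gk jk"
    and trials_in_X: "\<And>k j. j \<le> jk k \<Longrightarrow> x k + alg1_step \<eta> g c H x d \<tau> Lk Gk k j *\<^sub>R d k \<in> X"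
begin

abbreviation "trial k j \<equiv> alg1_step \<eta> g c H x d \<tau> Lk Gk k j"

abbreviation "f_model_holds k j \<equiv>
  f (x k + trial k j *\<^sub>R d k)
    \<le> f (x k) + trial k j * (g (x k) \<bullet> d k) + 1/2 * Lk k j * (trial k j)\<^sup>2 * (norm (d k))\<^sup>2"

abbreviation "c_model_holds k j i \<equiv>
  \<bar>c (x k + trial k j *\<^sub>R d k) $ i\<bar>
    \<le> \<bar>c (x k) $ i + trial k j * ((J (x k) *v d k) $ i)\<bar> + 1/2 * Gk k j i * (trial k j)\<^sup>2 * (norm (d k))\<^sup>2"

lemma
  shows initial_L: "0 < Lk k 0 \<and> Lk k 0 \<le> (if k = 0 then Linit else Lk (k - 1) (jk (k - 1)))"
    and initial_G: "0 < Gk k 0 i \<and> Gk k 0 i \<le> (if k = 0 then Ginit i else Gk (k - 1) (jk (k - 1)) i)"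
    and update_L: "j < jk k \<Longrightarrow> Lk k (Suc j) = (if f_model_holds k j then Lk k j else \<rho> * Lk k j)"
    and update_G: "j < jk k \<Longrightarrow> Gk k (Suc j) i = (if c_model_holds k j i then Gk k j i else \<rho> * Gk k j i)"
    and accepted: "sufficient_decrease k (trial k (jk k))
                     \<or> (f_model_holds k (jk k) \<and> (\<forall>i. c_model_holds k (jk k) i))"
    and stepsize_eq: "\<alpha> k = trial k (jk k)"
  using adaptive unfolding alg1_def Let_def by blast+

lemma L_rejected_below_Lg:
  assumes "j \<le> jk k" "\<not> f_model_holds k j"
  shows "Lk k j < Lg"
proof (rule ccontr)
  assume "\<not> Lk k j < Lg"
  then have "f_model_holds k j"
    by (intro f_local_model iterates_in_X trials_in_X assms(1)) simp
  with assms(2) show False ..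
qed

lemma G_rejected_below_\<gamma>:
  assumes "j \<le> jk k" "\<not> c_model_holds k j i"
  shows "Gk k j i < \<gamma> i"
proof (rule ccontr)
  assume "\<not> Gk k j i < \<gamma> i"
  then have "c_model_holds k j i"
    by (intro c_component_local_model iterates_in_X trials_in_X assms(1)) simp
  with assms(2) show False ..
qed

abbreviation "estimates_bounded k j \<equiv>
  0 < Lk k j \<and> Lk k j \<le> max Linit (\<rho> * Lg)
    \<and> (\<forall>i. 0 < Gk k j i \<and> Gk k j i \<le> max (Ginit i) (\<rho> * \<gamma> i))"

lemma estimates_bounded_in_inner_loop:
  assumes "estimates_bounded k 0" "j \<le> jk k"
  shows "estimates_bounded k j"
  using assms(2)
proof (induction j)
  case (Suc j)
  then have j: "j < jk k" and "estimates_bounded k j"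
    by auto
  then have "0 < Lk k (Suc j) \<and> Lk k (Suc j) \<le> max Linit (\<rho> * Lg)"
    unfolding update_L[OF j] by (intro rho_update_bounded \<rho> L_rejected_below_Lg) auto
  moreover have "0 < Gk k (Suc j) i \<and> Gk k (Suc j) i \<le> max (Ginit i) (\<rho> * \<gamma> i)" for i
    unfolding update_G[OF j] using \<open>estimates_bounded k j\<close> j
    by (intro rho_update_bounded \<rho> G_rejected_below_\<gamma>) auto
  ultimately show ?case
    by blast
qed (rule assms(1))

lemma estimates_bounded:
  assumes "j \<le> jk k"
  shows "estimates_bounded k j"
proof -
  have "estimates_bounded k 0" for k
  proof (induction k)
    case 0
    then show ?case
      using initial_L[of 0] initial_G[of 0] by (simp add: le_max_iff_disj)
  next
    case (Suc k)
    then have "estimates_bounded k (jk k)"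
      by (rule estimates_bounded_in_inner_loop) simp
    moreover have "0 < Lk (Suc k) 0" "Lk (Suc k) 0 \<le> Lk k (jk k)"
      and "0 < Gk (Suc k) 0 i" "Gk (Suc k) 0 i \<le> Gk k (jk k) i" for i
      using initial_L[of "Suc k"] initial_G[of "Suc k"] by simp_all
    ultimately show ?case
      by (meson order_trans)
  qed
  then show ?thesis
    using assms by (rule estimates_bounded_in_inner_loop)
qed

abbreviation "Lambda k j \<equiv> \<tau> k * Lk k j + (\<Sum>i\<in>UNIV. Gk k j i)"

lemma Lambda_bounds:
  assumes "j \<le> jk k"
  shows "0 < Lambda k j"
    and "Lambda k j \<le> \<tau>init * max Linit (\<rho> * Lg) + (\<Sum>i\<in>UNIV. max (Ginit i) (\<rho> * \<gamma> i))"
proof -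
  note bounds = estimates_bounded[OF assms]
  show "0 < Lambda k j"
    using tau_pos[of k] bounds by (intro add_pos_pos mult_pos_pos sum_pos) auto
  have "\<tau> k * Lk k j \<le> \<tau>init * max Linit (\<rho> * Lg)"
    using tau_pos[of k] tau_le_init[of k] bounds by (intro mult_mono) auto
  moreover have "(\<Sum>i\<in>UNIV. Gk k j i) \<le> (\<Sum>i\<in>UNIV. max (Ginit i) (\<rho> * \<gamma> i))"
    using bounds by (intro sum_mono) auto
  ultimately show "Lambda k j
      \<le> \<tau>init * max Linit (\<rho> * Lg) + (\<Sum>i\<in>UNIV. max (Ginit i) (\<rho> * \<gamma> i))"
    by simp
qed

lemma trial_eq:
  "trial k j = alg1_alpha \<eta> (model_reduction k) (l1norm (c (x k))) (Lambda k j) ((norm (d k))\<^sup>2)"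
  by (simp add: alg1_step_def)

lemma trial_pos:
  assumes "j \<le> jk k"
  shows "0 < trial k j"
proof -
  have "0 < min 1 (2 * (1 - \<eta>) * model_reduction k / (Lambda k j * (norm (d k))\<^sup>2))"
    using params model_reduction_pos[of k] Lambda_bounds(1)[OF assms] step_nonzero[of k]
    by simp
  also have "\<dots> \<le> trial k j"
    unfolding trial_eq by (rule alg1_alpha_ge)
  finally show ?thesis .
qed

lemma accepted_suff_dec: "sufficient_decrease k (\<alpha> k)"
proof -
  have "sufficient_decrease k (trial k (jk k))"
    using accepted[of k]
  proof (elim disjE conjE)
    assume f_model: "f_model_holds k (jk k)" and c_models: "\<forall>i. c_model_holds k (jk k) i"
    show ?thesis
    proof (rule suff_dec_of_local_models[where L = "Lk k (jk k)" and \<Gamma> = "Gk k (jk k)"])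
      show "0 \<le> \<tau> k" "0 \<le> trial k (jk k)"
        using tau_pos[of k] trial_pos[of "jk k" k] by simp_all
      show "J (x k) *v d k = - c (x k)"
        by (rule feasibility)
      show "f_model_holds k (jk k)"
        by (rule f_model)
      show "c_model_holds k (jk k) i" for i
        using c_models ..
      have "0 < Lambda k (jk k) * (norm (d k))\<^sup>2"
        using Lambda_bounds(1)[of "jk k" k] step_nonzero[of k] by simp
      then show "(trial k (jk k) \<le> 1
            \<and> Lambda k (jk k) * trial k (jk k) * (norm (d k))\<^sup>2
                \<le> 2 * (1 - \<eta>) * model_reduction k)
          \<or> (1 < trial k (jk k)
            \<and> Lambda k (jk k) * trial k (jk k) * (norm (d k))\<^sup>2
                = 2 * (1 - \<eta>) * model_reduction k - 4 * l1norm (c (x k)))"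
        unfolding trial_eq by (rule alg1_alpha_cases)
    qed
  qed
  then show ?thesis
    using stepsize_eq by simp
qed

lemma stepsize_bounded:
  obtains \<alpha>min where "0 < \<alpha>min" "\<And>k. \<alpha>min \<le> \<alpha> k" "\<And>k. sufficient_decrease k (\<alpha> k)"
proof -
  obtain \<kappa>q where \<kappa>q: "0 < \<kappa>q" "\<And>k. \<kappa>q * (norm (d k))\<^sup>2 \<le> model_reduction k"
    using model_reduction_ge_step by blast
  define \<Lambda>max where "\<Lambda>max = \<tau>init * max Linit (\<rho> * Lg) + (\<Sum>i\<in>UNIV. max (Ginit i) (\<rho> * \<gamma> i))"
  have "0 < \<Lambda>max"
    using Lambda_bounds[of 0 0] unfolding \<Lambda>max_def by linarith
  have "min 1 (2 * (1 - \<eta>) * \<kappa>q / \<Lambda>max) \<le> \<alpha> k" for k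
  proof -
    define \<Lambda> where "\<Lambda> = Lambda k (jk k)"
    define D where "D = (norm (d k))\<^sup>2"
    have "0 < \<Lambda>" "\<Lambda> \<le> \<Lambda>max"
      using Lambda_bounds[of "jk k" k] by (simp_all add: \<Lambda>_def \<Lambda>max_def)
    have "0 < D"
      using step_nonzero[of k] by (simp add: D_def)
    have "2 * (1 - \<eta>) * \<kappa>q / \<Lambda>max \<le> 2 * (1 - \<eta>) * \<kappa>q / \<Lambda>"
      using \<open>0 < \<Lambda>\<close> \<open>\<Lambda> \<le> \<Lambda>max\<close> \<kappa>q(1) params by (intro divide_left_mono) auto
    also have "\<dots> = 2 * (1 - \<eta>) * (\<kappa>q * D) / (\<Lambda> * D)"
      using \<open>0 < D\<close> by simp
    also have "\<dots> \<le> 2 * (1 - \<eta>) * model_reduction k / (\<Lambda> * D)"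
      using \<kappa>q(2)[of k] \<open>0 < \<Lambda>\<close> \<open>0 < D\<close> params
      by (intro divide_right_mono mult_left_mono) (auto simp: D_def)
    finally have "min 1 (2 * (1 - \<eta>) * \<kappa>q / \<Lambda>max) \<le> min 1 (2 * (1 - \<eta>) * model_reduction k / (\<Lambda> * D))"
      by (rule min.mono[OF order_refl])
    also have "\<dots> \<le> \<alpha> k"
      unfolding stepsize_eq trial_eq \<Lambda>_def D_def by (rule alg1_alpha_ge)
    finally show ?thesis .
  qed
  moreover have "0 < min 1 (2 * (1 - \<eta>) * \<kappa>q / \<Lambda>max)"
    using \<open>0 < \<Lambda>max\<close> \<kappa>q(1) params by simp
  ultimately show thesis
    using that accepted_suff_dec by blast
qed

end

context sqp_setting
begin

lemma stepsize_bounded_alg1: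
  assumes "1 < \<rho> \<and> 0 < Linit \<and> (\<forall>i. 0 < Ginit i)
    \<and> alg1 f g c J H x d \<tau> \<alpha> \<eta> \<rho> Linit Ginit Lk Gk jk
    \<and> (\<forall>k. \<forall>j \<le> jk k. x k + alg1_step \<eta> g c H x d \<tau> Lk Gk k j *\<^sub>R d k \<in> X)"
  obtains \<alpha>min where "0 < \<alpha>min" "\<And>k. \<alpha>min \<le> \<alpha> k" "\<And>k. sufficient_decrease k (\<alpha> k)"
proof -
  interpret sqp_alg1 X f g c J Lg \<gamma> H x d y \<tau> \<alpha> \<tau>init \<epsilon> \<sigma> \<eta> Bg Bc \<kappa>J \<kappa>H \<zeta>
    \<rho> Linit Ginit Lk Gk jk
    using assms by unfold_locales auto
  show thesis
    using stepsize_bounded that by blast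
qed

lemma stepsize_bounded_alg2:
  assumes "0 < \<nu> \<and> \<nu> < 1 \<and> 0 < \<alpha>0 \<and> alg2 f g c H x d \<tau> \<alpha> \<eta> \<nu> \<alpha>0
    \<and> (\<forall>k j. (\<forall>i < j. \<not> sufficient_decrease k (\<nu> ^ i * \<alpha>0)) \<longrightarrow> x k + (\<nu> ^ j * \<alpha>0) *\<^sub>R d k \<in> X)"
  obtains \<alpha>min where "0 < \<alpha>min" "\<And>k. \<alpha>min \<le> \<alpha> k" "\<And>k. sufficient_decrease k (\<alpha> k)"
proof -
  interpret sqp_alg2 X f g c J Lg \<gamma> H x d y \<tau> \<alpha> \<tau>init \<epsilon> \<sigma> \<eta> Bg Bc \<kappa>J \<kappa>H \<zeta> \<nu> \<alpha>0
    using assms by unfold_locales auto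
  show thesis
    using stepsize_bounded that by blast
qed

end

theorem theorem2p18:
  fixes f :: "real^'n \<Rightarrow> real" and g :: "real^'n \<Rightarrow> real^'n"
    and c :: "real^'n \<Rightarrow> real^'m" and J :: "real^'n \<Rightarrow> real^'n^'m"
    and H :: "nat \<Rightarrow> real^'n^'n" and x d :: "nat \<Rightarrow> real^'n" and y :: "nat \<Rightarrow> real^'m"
    and \<tau> \<alpha> :: "nat \<Rightarrow> real" and X :: "(real^'n) set"
    and \<tau>init \<epsilon> \<sigma> \<eta> :: real
    and \<rho> Linit :: real and Ginit :: "'m \<Rightarrow> real"
    and Lk :: "nat \<Rightarrow> nat \<Rightarrow> real" and Gk :: "nat \<Rightarrow> nat \<Rightarrow> 'm \<Rightarrow> real" and jk :: "nat \<Rightarrow> nat"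
    and \<nu> \<alpha>0 :: real
  assumes params: "0 < \<tau>init" "0 < \<epsilon>" "\<epsilon> < 1" "0 < \<sigma>" "\<sigma> < 1" "0 < \<eta>" "\<eta> < 1"
    and X_open: "open X" and X_convex: "convex X"
    and iterates_in_X: "\<forall>k. x k \<in> X"
    and f_deriv: "\<forall>z\<in>X. (f has_derivative (\<lambda>h. g z \<bullet> h)) (at z)"
    and g_cont: "continuous_on X g"
    and f_bdd_below: "bdd_below (f ` X)"
    and g_bounded: "bounded (g ` X)"
    and g_lipschitz: "\<exists>L. \<forall>z\<in>X. \<forall>w\<in>X. norm (g z - g w) \<le> L * norm (z - w)"
    and c_deriv: "\<forall>z\<in>X. (c has_derivative (\<lambda>h. J z *v h)) (at z)"
    and c_bounded: "bounded (c ` X)"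
    and J_bounded: "bounded (J ` X)"
    and J_rows_lipschitz: "\<exists>\<gamma>::'m \<Rightarrow> real. \<forall>i. \<forall>z\<in>X. \<forall>w\<in>X.
                             norm (J z $ i - J w $ i) \<le> \<gamma> i * norm (z - w)"
    and J_sing_vals: "\<exists>\<kappa>>0. \<forall>z\<in>X. sing_vals_ge \<kappa> (J z)"
    and matrix_assm: "\<exists>\<kappa>H \<zeta>. 0 < \<kappa>H \<and> 0 < \<zeta> \<and>
         (\<forall>k. transpose (H k) = H k \<and> onorm (\<lambda>v. H k *v v) \<le> \<kappa>H
              \<and> (\<forall>u. J (x k) *v u = 0 \<longrightarrow> \<zeta> * (norm u)^2 \<le> u \<bullet> (H k *v u)))"
    and common: "sqp_common g c J H x d y \<tau> \<alpha> \<tau>init \<epsilon> \<sigma>"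
    and algorithm:
      "(1 < \<rho> \<and> 0 < Linit \<and> (\<forall>i. 0 < Ginit i)
         \<and> alg1 f g c J H x d \<tau> \<alpha> \<eta> \<rho> Linit Ginit Lk Gk jk
         \<and> (\<forall>k. \<forall>j \<le> jk k. x k + alg1_step \<eta> g c H x d \<tau> Lk Gk k j *\<^sub>R d k \<in> X))
       \<or> (0 < \<nu> \<and> \<nu> < 1 \<and> 0 < \<alpha>0
         \<and> alg2 f g c H x d \<tau> \<alpha> \<eta> \<nu> \<alpha>0
         \<and> (\<forall>k j. (\<forall>i < j. \<not> suff_dec f c \<eta> (\<tau> k) (x k) (g (x k)) (H k) (d k) (\<nu> ^ i * \<alpha>0))
                 \<longrightarrow> x k + (\<nu> ^ j * \<alpha>0) *\<^sub>R d k \<in> X))"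
  shows "(\<lambda>k. norm (d k)) \<longlonglongrightarrow> 0
       \<and> (\<lambda>k. norm (c (x k))) \<longlonglongrightarrow> 0
       \<and> (\<lambda>k. norm (g (x k) + transpose (J (x k)) *v y k)) \<longlonglongrightarrow> 0"
proof -
  obtain Lg where Lg: "\<forall>z\<in>X. \<forall>w\<in>X. norm (g z - g w) \<le> Lg * norm (z - w)"
    using g_lipschitz by blast
  obtain \<gamma> :: "'m \<Rightarrow> real"
    where \<gamma>: "\<forall>i. \<forall>z\<in>X. \<forall>w\<in>X. norm (J z $ i - J w $ i) \<le> \<gamma> i * norm (z - w)"
    using J_rows_lipschitz by blast
  obtain \<kappa>J where \<kappa>J: "0 < \<kappa>J" "\<forall>z\<in>X. sing_vals_ge \<kappa>J (J z)"
    using J_sing_vals by blast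
  obtain \<kappa>H \<zeta> where \<kappa>H: "0 < \<zeta>" "\<forall>k. onorm (\<lambda>v. H k *v v) \<le> \<kappa>H"
    "\<forall>k u. J (x k) *v u = 0 \<longrightarrow> \<zeta> * (norm u)\<^sup>2 \<le> u \<bullet> (H k *v u)"
    using matrix_assm by blast
  obtain Bg Bc where B: "\<forall>z\<in>X. norm (g z) \<le> Bg" "\<forall>z\<in>X. norm (c z) \<le> Bc"
    using g_bounded c_bounded by (auto simp: bounded_iff)
  interpret sqp_setting X f g c J Lg \<gamma> H x d y \<tau> \<alpha> \<tau>init \<epsilon> \<sigma> \<eta> Bg Bc \<kappa>J \<kappa>H \<zeta>
    by unfold_locales (use params X_convex iterates_in_X f_deriv f_bdd_below c_deriv common
      Lg \<gamma> \<kappa>J \<kappa>H B in auto)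
  from algorithm obtain \<alpha>min
    where "0 < \<alpha>min" "\<And>k. \<alpha>min \<le> \<alpha> k" "\<And>k. sufficient_decrease k (\<alpha> k)"
    using stepsize_bounded_alg1 stepsize_bounded_alg2 by blast
  then show ?thesis
    by (intro kkt_residuals_tendsto_zero model_reduction_tendsto_zero)
qed

end
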